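(* Let $\mu$ be a freely infinitely divisible probability measure on $\mathbf{R}$ with free generating pair $(\gamma,\sigma)$, so that $\phi_\mu(z)=\gamma+\int_{\mathbf{R}}\frac{1+xz}{z-x}\,d\sigma(x)$ for $z\in\mathbf{C}^+$. Let $T>0$. Then the following are equivalent: (1) $\int_{\mathbf{R}}\log(1+x^2)\,d\mu(x)<\infty$; (2) $\int_{\mathbf{R}}\log(1+x^2)\,d\sigma(x)<\infty$; (3) $\int_T^\infty\frac{-\Im\phi_\mu(\mathrm{i}y)}{y^2}\,dy<\infty$; (4) $\int_0^{1/T}\Im R_\mu(\mathrm{i}y)\,dy<\infty$; (5) $\int_T^\infty\frac{\Im F_\mu(\mathrm{i}y)-y}{y^2}\,dy<\infty$.
   Context: For a probability measure $\mu$ on $\mathbf{R}$, $G_\mu(z)=\int\frac{d\mu(t)}{z-t}$ and $F_\mu=1/G_\mu$ on $\mathbf{C}^+$; the Voiculescu transform is $\phi_\mu(z)=F_\mu^{\langle-1\rangle}(z)-z$ on a truncated cone in $\mathbf{C}^+$. $\mu$ is freely infinitely divisible iff $\phi_\mu$ extends analytically to $\mathbf{C}^+$ with values in $\mathbf{C}^-\cup\mathbf{R}$, in which case there are unique $\gamma\in\mathbf{R}$ and finite positive Borel $\sigma$ giving the displayed representation (the free generating pair). Functions on $\mathbf{C}^+$ are extended to $\mathbf{C}^-$ by $f(z)=\overline{f(\bar z)}$. The $R$-transform is $R_\mu(w)=\phi_\mu(1/w)$; thus for $y>0$, $R_\mu(\mathrm{i}y)=\phi_\mu(-\mathrm{i}/y)=\overline{\phi_\mu(\mathrm{i}/y)}$,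 so $\Im R_\mu(\mathrm{i}y)=-\Im\phi_\mu(\mathrm{i}/y)\ge0$. *)

theory Defs
  imports "HOL-Probability.Probability"
begin

definition cauchy_transform :: "real measure \<Rightarrow> complex \<Rightarrow> complex" where
  "cauchy_transform \<mu> z = integral\<^sup>L \<mu> (\<lambda>t. 1 / (z - complex_of_real t))"

definition F_transform :: "real measure \<Rightarrow> complex \<Rightarrow> complex" where
  "F_transform \<mu> z = 1 / cauchy_transform \<mu> z"

definition phi_repr :: "real \<Rightarrow> real measure \<Rightarrow> complex \<Rightarrow> complex" where
  "phi_repr \<gamma> \<sigma> z = complex_of_real \<gamma> +
     integral\<^sup>L \<sigma> (\<lambda>x. (1 + complex_of_real x * z) / (z - complex_of_real x))"

definition phi_ext :: "real \<Rightarrow> real measure \<Rightarrow> complex \<Rightarrow> complex" where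
  "phi_ext \<gamma> \<sigma> z = (if Im z > 0 then phi_repr \<gamma> \<sigma> z else cnj (phi_repr \<gamma> \<sigma> (cnj z)))"

definition R_transform :: "real \<Rightarrow> real measure \<Rightarrow> complex \<Rightarrow> complex" where
  "R_transform \<gamma> \<sigma> w = phi_ext \<gamma> \<sigma> (1 / w)"

text \<open>mu is a (Borel) probability measure on R which is freely infinitely divisible with
  free generating pair (gamma, sigma): sigma is a finite positive Borel measure and the
  Voiculescu transform phi_mu(z) = F_mu^{-1}(z) - z, on some truncated cone
  {z. Im z > beta, |Re z| < alpha Im z}, is given there by phi_repr gamma sigma
  (which is then its analytic extension to the upper half-plane).\<close>
definition free_generating_pair :: "real measure \<Rightarrow> real \<Rightarrow> real measure \<Rightarrow> bool" where
  "free_generating_pair \<mu> \<gamma> \<sigma> \<longleftrightarrow>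
     prob_space \<mu> \<and> sets \<mu> = sets borel \<and>
     finite_measure \<sigma> \<and> sets \<sigma> = sets borel \<and>
     (\<exists>\<alpha>>0. \<exists>\<beta>>0. \<forall>z. Im z > \<beta> \<and> \<bar>Re z\<bar> < \<alpha> * Im z \<longrightarrow>
        Im (z + phi_repr \<gamma> \<sigma> z) > 0 \<and> F_transform \<mu> (z + phi_repr \<gamma> \<sigma> z) = z)"

end

theory Submission
  imports Defs
begin

text \<open>
  By Tonelli, the integral in (3) equals
  \<open>\<integral> \<integral>\<^sub>T\<^sup>\<infinity> (1 + x\<^sup>2) / (y (x\<^sup>2 + y\<^sup>2)) dy d\<sigma>(x)\<close>, and the inner integral is
  \<open>ln (1 + x\<^sup>2 / T\<^sup>2) / 2\<close> up to an error bounded by \<open>1 / (2 T\<^sup>2)\<close>; the substitution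
  \<open>y \<mapsto> 1 / y\<close> turns the integral in (4) into the one in (3).

  For \<open>\<mu>\<close> everything is compared with the spread
  \<open>S(w) = \<integral>\<integral> \<bar>1/(w - t) - 1/(w - s)\<bar>\<^sup>2 d\<mu>(t) d\<mu>(s) = 2 (- Im G(w) / Im w - \<bar>G(w)\<bar>\<^sup>2)\<close>
  of the Cauchy kernel. On the imaginary axis \<open>y S(iy)\<close> is squeezed between multiples of
  \<open>\<integral> t\<^sup>2 / (y (y\<^sup>2 + t\<^sup>2)) d\<mu>(t)\<close> (restricted to \<open>\<bar>t\<bar> \<ge> 2M\<close> for the lower bound, where
  \<open>[-M, M]\<close> carries half of the mass), whose integral over \<open>(T, \<infinity>)\<close> is
  \<open>\<integral> ln (1 + t\<^sup>2 / T\<^sup>2) / 2 d\<mu>\<close>; so (1) holds iff \<open>\<integral>\<^sub>T\<^sup>\<infinity> y S(iy) dy < \<infinity>\<close>.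
  Condition (5) is equivalent to the same thing, because
  \<open>(Im F(iy) - y) / y\<^sup>2 = y S(iy) / (2 y\<^sup>2 \<bar>G(iy)\<bar>\<^sup>2)\<close> and \<open>y \<bar>G(iy)\<bar>\<close> is bounded above and
  below for \<open>y > T\<close>. Finally, at the subordination point \<open>w = iy + \<phi>(iy)\<close> we have
  \<open>G(w) = 1/(iy)\<close>, which makes the spread formula read
  \<open>- Im \<phi>(iy) / y\<^sup>2 = (Im w / 2) S(w)\<close>; for large \<open>y\<close> the point \<open>w\<close> stays in a cone around
  \<open>iy\<close>, so \<open>S(w)\<close> and \<open>S(iy)\<close> are comparable, and (3) is equivalent to the same condition.
\<close>

lemma exists_measure_abs_le_ge_half:
  fixes \<mu> :: "real measure"
  assumes "prob_space \<mu>" and sets: "sets \<mu> = sets borel"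
  shows "\<exists>M. measure \<mu> {x. \<bar>x\<bar> \<le> M} \<ge> 1 / 2"
proof -
  interpret prob_space \<mu> by fact
  define A where "A n = {x::real. \<bar>x\<bar> \<le> real n}" for n
  have "range A \<subseteq> sets \<mu>" "incseq A"
    unfolding A_def sets by (auto simp: incseq_def)
  moreover have "(\<Union>n. A n) = space \<mu>"
    using sets_eq_imp_space_eq[OF sets] real_arch_simple by (auto simp: A_def)
  ultimately have "(\<lambda>n. measure \<mu> (A n)) \<longlonglongrightarrow> 1"
    using finite_Lim_measure_incseq[of A] prob_space by simp
  then have "\<forall>\<^sub>F n in sequentially. measure \<mu> (A n) > 1 / 2"
    by (rule order_tendstoD) simp
  then obtain n where "measure \<mu> (A n) > 1 / 2"
    by (auto simp: eventually_sequentially)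
  then show ?thesis
    unfolding A_def by (auto intro: less_imp_le)
qed

lemma nn_integral_less_top_if_le_affine:
  fixes f g :: "'a \<Rightarrow> ennreal"
  assumes "finite_measure N" and g: "g \<in> borel_measurable N"
    and le: "\<And>x. x \<in> space N \<Longrightarrow> f x \<le> c * g x + d"
    and "c < \<infinity>" "d < \<infinity>" "(\<integral>\<^sup>+x. g x \<partial>N) < \<infinity>"
  shows "(\<integral>\<^sup>+x. f x \<partial>N) < \<infinity>"
proof -
  interpret finite_measure N by fact
  have "(\<integral>\<^sup>+x. f x \<partial>N) \<le> (\<integral>\<^sup>+x. c * g x + d \<partial>N)"
    by (rule nn_integral_mono) (rule le)
  also have "\<dots> = c * (\<integral>\<^sup>+x. g x \<partial>N) + d * emeasure N (space N)"
    using g by (simp add: nn_integral_add nn_integral_cmult)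
  also have "\<dots> < \<infinity>"
    using assms emeasure_real[of "space N"] by (auto simp: ennreal_mult_less_top)
  finally show ?thesis .
qed

lemma nn_integral_Ioi_less_top_if_eventually_le:
  fixes f g :: "real \<Rightarrow> ennreal"
  assumes g: "g \<in> borel_measurable borel" and "T \<le> Y"
    and le_const: "\<And>y. T < y \<Longrightarrow> y \<le> Y \<Longrightarrow> f y \<le> ennreal B"
    and le_mult: "\<And>y. Y < y \<Longrightarrow> f y \<le> ennreal C * g y"
    and "(\<integral>\<^sup>+y\<in>{T<..}. g y \<partial>lborel) < \<infinity>"
  shows "(\<integral>\<^sup>+y\<in>{T<..}. f y \<partial>lborel) < \<infinity>"
proof -
  have "f y * indicator {T<..} y
      \<le> ennreal B * indicator {T<..Y} y + ennreal C * (g y * indicator {T<..} y)" for y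
  proof (cases "T < y \<and> y \<le> Y")
    case True
    then have "f y \<le> ennreal B + ennreal C * g y"
      using le_const[of y] by (simp add: add_increasing2)
    then show ?thesis using True by (simp add: indicator_def)
  next
    case False
    then show ?thesis using le_mult[of y] by (auto simp: indicator_def)
  qed
  then have "(\<integral>\<^sup>+y\<in>{T<..}. f y \<partial>lborel)
      \<le> (\<integral>\<^sup>+y. ennreal B * indicator {T<..Y} y + ennreal C * (g y * indicator {T<..} y) \<partial>lborel)"
    by (rule nn_integral_mono)
  also have "\<dots> = ennreal B * emeasure lborel {T<..Y} + ennreal C * (\<integral>\<^sup>+y\<in>{T<..}. g y \<partial>lborel)"
    using g by (simp add: nn_integral_add nn_integral_cmult)
  also have "\<dots> < \<infinity>"
    using assms by (simp add: ennreal_mult_less_top)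
  finally show ?thesis .
qed

lemma nn_integral_Ioi_less_top_iff_if_comparable:
  fixes f g :: "real \<Rightarrow> ennreal"
  assumes "f \<in> borel_measurable borel" "g \<in> borel_measurable borel" and "T \<le> Y"
    and "\<And>y. T < y \<Longrightarrow> y \<le> Y \<Longrightarrow> f y \<le> ennreal B"
    and "\<And>y. T < y \<Longrightarrow> y \<le> Y \<Longrightarrow> g y \<le> ennreal B"
    and "\<And>y. Y < y \<Longrightarrow> f y \<le> ennreal C * g y"
    and "\<And>y. Y < y \<Longrightarrow> g y \<le> ennreal C' * f y"
  shows "(\<integral>\<^sup>+y\<in>{T<..}. f y \<partial>lborel) < \<infinity> \<longleftrightarrow> (\<integral>\<^sup>+y\<in>{T<..}. g y \<partial>lborel) < \<infinity>"
  using nn_integral_Ioi_less_top_if_eventually_le[of g T Y f B C]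
    nn_integral_Ioi_less_top_if_eventually_le[of f T Y g B C'] assms
  by metis

lemma nn_integral_lborel_swap:
  fixes f :: "'a \<Rightarrow> real \<Rightarrow> ennreal"
  assumes "sigma_finite_measure M" and sets: "sets M = sets L"
    and f: "(\<lambda>(x, y). f x y) \<in> borel_measurable (L \<Otimes>\<^sub>M borel)"
  shows "(\<integral>\<^sup>+y. (\<integral>\<^sup>+x. f x y \<partial>M) \<partial>lborel) = (\<integral>\<^sup>+x. (\<integral>\<^sup>+y. f x y \<partial>lborel) \<partial>M)"
proof -
  interpret M: sigma_finite_measure M by fact
  interpret pair_sigma_finite M lborel
    by (intro pair_sigma_finite.intro M.sigma_finite_measure_axioms lborel.sigma_finite_measure_axioms)
  have pair_sets: "sets (M \<Otimes>\<^sub>M lborel) = sets (L \<Otimes>\<^sub>M borel)"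
    using sets by (intro sets_pair_measure_cong) simp_all
  have "(\<lambda>(x, y). f x y) \<in> borel_measurable (M \<Otimes>\<^sub>M lborel)"
    unfolding measurable_cong_sets[OF pair_sets refl] by (rule f)
  then show ?thesis by (rule Fubini')
qed

lemma borel_measurable_nn_integral_param:
  fixes f :: "'a \<Rightarrow> 'b \<Rightarrow> ennreal"
  assumes "sigma_finite_measure \<mu>" and sets: "sets \<mu> = sets L"
    and f: "(\<lambda>(x, t). f x t) \<in> borel_measurable (N \<Otimes>\<^sub>M L)"
  shows "(\<lambda>x. \<integral>\<^sup>+t. f x t \<partial>\<mu>) \<in> borel_measurable N"
proof -
  interpret sigma_finite_measure \<mu> by fact
  have pair_sets: "sets (N \<Otimes>\<^sub>M \<mu>) = sets (N \<Otimes>\<^sub>M L)"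
    using sets by (intro sets_pair_measure_cong) simp_all
  have "(\<lambda>(x, t). f x t) \<in> borel_measurable (N \<Otimes>\<^sub>M \<mu>)"
    unfolding measurable_cong_sets[OF pair_sets refl] by (rule f)
  then show ?thesis by (rule borel_measurable_nn_integral)
qed

lemma borel_measurable_integral_param:
  fixes f :: "'a \<Rightarrow> 'b \<Rightarrow> 'c::{banach, second_countable_topology}"
  assumes "sigma_finite_measure \<mu>" and sets: "sets \<mu> = sets L"
    and f: "(\<lambda>(x, t). f x t) \<in> borel_measurable (N \<Otimes>\<^sub>M L)"
  shows "(\<lambda>x. \<integral>t. f x t \<partial>\<mu>) \<in> borel_measurable N"
proof -
  interpret sigma_finite_measure \<mu> by fact
  have pair_sets: "sets (N \<Otimes>\<^sub>M \<mu>) = sets (N \<Otimes>\<^sub>M L)"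
    using sets by (intro sets_pair_measure_cong) simp_all
  have "(\<lambda>(x, t). f x t) \<in> borel_measurable (N \<Otimes>\<^sub>M \<mu>)"
    unfolding measurable_cong_sets[OF pair_sets refl] by (rule f)
  then show ?thesis by (rule borel_measurable_lebesgue_integral)
qed

lemma nn_integral_indicator_incseq_LIMSEQ:
  fixes f :: "'a \<Rightarrow> ennreal"
  assumes A: "incseq A" "\<And>n. A n \<in> sets M" and f: "f \<in> borel_measurable M"
  shows "(\<lambda>n. \<integral>\<^sup>+x. f x * indicator (A n) x \<partial>M) \<longlonglongrightarrow> (\<integral>\<^sup>+x. f x * indicator (\<Union>n. A n) x \<partial>M)"
proof (rule nn_integral_LIMSEQ)
  show "incseq (\<lambda>n x. f x * indicator (A n) x)"
    using A(1) by (auto simp: incseq_def le_fun_def indicator_def subset_eq)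
  show "(\<lambda>x. f x * indicator (A n) x) \<in> borel_measurable M" for n
    using A(2) f by measurable
  fix x
  show "(\<lambda>n. f x * indicator (A n) x) \<longlonglongrightarrow> f x * indicator (\<Union>n. A n) x"
  proof (cases "x \<in> (\<Union>n. A n)")
    case True
    then obtain N where "x \<in> A N" by blast
    then have "\<forall>\<^sub>F n in sequentially. x \<in> A n"
      using A(1) by (auto simp: eventually_sequentially incseq_def)
    then show ?thesis
      using True by (intro tendsto_eventually) (auto elim!: eventually_mono)
  qed auto
qed

lemma AE_lborel_indicator_Ioi_eq_Ici:
  "AE y in lborel. (indicator {a<..} y :: ennreal) = indicator {a..} (y::real)"
  using AE_lborel_singleton[of a] by eventually_elim (auto simp: indicator_def)

lemma nn_integral_Icc_inverse_substitution:
  fixes f :: "real \<Rightarrow> ennreal"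
  assumes f[measurable]: "f \<in> borel_measurable borel" and T: "0 < T" "T < b"
  shows "(\<integral>\<^sup>+y. f y * indicator {1/b..1/T} y \<partial>lborel)
       = (\<integral>\<^sup>+u. f (1 / u) * ennreal (1 / u\<^sup>2) * indicator {T..b} u \<partial>lborel)"
proof -
  have "(\<integral>\<^sup>+y. f y * indicator {1/b..1/T} y \<partial>lborel)
      = (\<integral>\<^sup>+x. f (- x) * indicator {- 1 / T..- 1 / b} x \<partial>lborel)"
    by (subst nn_integral_real_affine[where c = "-1" and t = 0])
      (auto simp: indicator_def intro!: nn_integral_cong)
  also have "\<dots> = (\<integral>\<^sup>+u. f (- (- 1 / u)) * ennreal (1 / u\<^sup>2) * indicator {T..b} u \<partial>lborel)"
  proof (rule nn_integral_substitution_aux[where f = "\<lambda>x. f (- x)" and g = "\<lambda>u. - 1 / u"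
        and g' = "\<lambda>u. 1 / u\<^sup>2"])
    fix u assume "u \<in> {T..b}"
    then have "u > 0" using T by simp
    then show "((\<lambda>u. - 1 / u) has_real_derivative 1 / u\<^sup>2) (at u)"
      by (auto intro!: derivative_eq_intros simp: power2_eq_square)
  next
    show "continuous_on {T..b} (\<lambda>u. 1 / u\<^sup>2)"
      using T by (intro continuous_intros) auto
  qed (use T in auto)
  finally show ?thesis by simp
qed

lemma nn_integral_Ioo_inverse_substitution:
  fixes f :: "real \<Rightarrow> ennreal"
  assumes f[measurable]: "f \<in> borel_measurable borel" and T: "0 < T"
  shows "(\<integral>\<^sup>+y\<in>{0<..<1/T}. f y \<partial>lborel) = (\<integral>\<^sup>+u\<in>{T<..}. f (1 / u) * ennreal (1 / u\<^sup>2) \<partial>lborel)"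
proof -
  define b where "b n = T + 1 + real n" for n
  have b: "T < b n" "0 < 1 / b n" for n
    using T by (simp_all add: b_def)
  have "incseq (\<lambda>n. {1 / b n..1/T})" "incseq (\<lambda>n. {T..b n})"
    using b by (auto simp: incseq_def b_def frac_le)
  moreover have "(\<Union>n. {1 / b n..1/T}) = {0<..1/T}"
  proof (intro subset_antisym subsetI)
    fix y :: real assume y: "y \<in> {0<..1/T}"
    obtain n :: nat where "1 / y < real n"
      using reals_Archimedean2 by blast
    then have "1 < y * real n"
      using y by (simp add: field_simps)
    moreover have "y * real n \<le> y * b n"
      using y T by (intro mult_left_mono) (auto simp: b_def)
    ultimately have "1 / b n \<le> y"
      using b(1)[of n] T by (simp add: field_simps)
    then show "y \<in> (\<Union>n. {1 / b n..1/T})"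
      using y by auto
  qed (auto intro: less_le_trans[OF b(2)])
  moreover have "(\<Union>n. {T..b n}) = {T..}"
  proof (intro subset_antisym subsetI)
    fix u :: real assume "u \<in> {T..}"
    moreover obtain n :: nat where "u < real n"
      using reals_Archimedean2 by blast
    ultimately show "u \<in> (\<Union>n. {T..b n})"
      using T by (auto simp: b_def intro!: exI[of _ n])
  qed auto
  ultimately have lim:
    "(\<lambda>n. \<integral>\<^sup>+y. f y * indicator {1 / b n..1/T} y \<partial>lborel) \<longlonglongrightarrow> (\<integral>\<^sup>+y\<in>{0<..1/T}. f y \<partial>lborel)"
    "(\<lambda>n. \<integral>\<^sup>+u. f (1 / u) * ennreal (1 / u\<^sup>2) * indicator {T..b n} u \<partial>lborel)
       \<longlonglongrightarrow> (\<integral>\<^sup>+u\<in>{T..}. f (1 / u) * ennreal (1 / u\<^sup>2) \<partial>lborel)"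
    using nn_integral_indicator_incseq_LIMSEQ[of "\<lambda>n. {1 / b n..1/T}" lborel f]
      nn_integral_indicator_incseq_LIMSEQ[of "\<lambda>n. {T..b n}" lborel "\<lambda>u. f (1 / u) * ennreal (1 / u\<^sup>2)"]
    by simp_all
  have "AE y in lborel. indicator {0<..<1/T} y = (indicator {0<..1/T} y :: ennreal)"
    using AE_lborel_singleton[of "1/T"] by eventually_elim (auto simp: indicator_def)
  then have "(\<integral>\<^sup>+y\<in>{0<..<1/T}. f y \<partial>lborel) = (\<integral>\<^sup>+y\<in>{0<..1/T}. f y \<partial>lborel)"
    by (intro nn_integral_cong_AE) (auto elim!: eventually_mono)
  also have "\<dots> = (\<integral>\<^sup>+u\<in>{T..}. f (1 / u) * ennreal (1 / u\<^sup>2) \<partial>lborel)"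
    using lim nn_integral_Icc_inverse_substitution[OF f T b(1)] by (auto intro: LIMSEQ_unique)
  also have "\<dots> = (\<integral>\<^sup>+u\<in>{T<..}. f (1 / u) * ennreal (1 / u\<^sup>2) \<partial>lborel)"
    using AE_lborel_indicator_Ioi_eq_Ici[of T]
    by (intro nn_integral_cong_AE) (auto elim!: eventually_mono)
  finally show ?thesis .
qed

lemma (in prob_space) nn_integral_sq_diff_eq_twice_variance:
  fixes f :: "'a \<Rightarrow> real"
  assumes f[measurable]: "f \<in> borel_measurable M" and f2: "integrable M (\<lambda>x. (f x)\<^sup>2)"
  shows "(\<integral>\<^sup>+t. (\<integral>\<^sup>+s. ennreal ((f t - f s)\<^sup>2) \<partial>M) \<partial>M) = ennreal (2 * variance f)"
proof -
  define m where "m = expectation f"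
  have [simp]: "integrable M f"
    using f f2 by (rule square_integrable_imp_integrable)
  have sq: "integrable M (\<lambda>x. (f x - c)\<^sup>2)" for c
    using f2 by (simp add: power2_diff)
  have inner: "(\<integral>s. (f t - f s)\<^sup>2 \<partial>M) = (f t - m)\<^sup>2 + variance f" for t
  proof -
    have "(f t - f s)\<^sup>2 = (f t - m)\<^sup>2 - 2 * (f t - m) * (f s - m) + (f s - m)\<^sup>2" for s
      by (simp add: power2_eq_square algebra_simps)
    moreover have "(\<integral>s. f s - m \<partial>M) = 0"
      by (simp add: m_def prob_space)
    ultimately show ?thesis
      using sq[of m] by (simp add: m_def prob_space)
  qed
  have inner_nn: "(\<integral>\<^sup>+s. ennreal ((f t - f s)\<^sup>2) \<partial>M) = ennreal ((f t - m)\<^sup>2 + variance f)" for t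
    using sq[of "f t"] unfolding inner[symmetric]
    by (intro nn_integral_eq_integral) (auto simp: power2_commute)
  have "(\<integral>\<^sup>+t. (\<integral>\<^sup>+s. ennreal ((f t - f s)\<^sup>2) \<partial>M) \<partial>M)
      = ennreal (\<integral>t. (f t - m)\<^sup>2 + variance f \<partial>M)"
    unfolding inner_nn
  proof (rule nn_integral_eq_integral)
    show "integrable M (\<lambda>t. (f t - m)\<^sup>2 + variance f)"
      using sq[of m] by simp
  qed (simp add: variance_positive add_nonneg_nonneg)
  also have "(\<integral>t. (f t - m)\<^sup>2 + variance f \<partial>M) = 2 * variance f"
    using sq[of m] by (simp add: m_def prob_space)
  finally show ?thesis .
qed

section \<open>Logarithmic integrals\<close>

definition ln_kernel :: "real \<Rightarrow> real \<Rightarrow> real" where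
  "ln_kernel y t = t\<^sup>2 / (y * (y\<^sup>2 + t\<^sup>2))"

lemma ln_kernel_nonneg: "y > 0 \<Longrightarrow> ln_kernel y t \<ge> 0"
  unfolding ln_kernel_def by (simp add: add_pos_nonneg)

lemma ln_kernel_le: assumes "y > 0" shows "ln_kernel y t \<le> 1 / y"
proof -
  have "t\<^sup>2 / (y\<^sup>2 + t\<^sup>2) \<le> 1"
    using assms by (simp add: divide_le_eq_1 add_pos_nonneg)
  then have "t\<^sup>2 / (y\<^sup>2 + t\<^sup>2) / y \<le> 1 / y"
    using assms by (intro divide_right_mono) auto
  then show ?thesis
    unfolding ln_kernel_def by (simp add: mult.commute)
qed

lemma ln_one_plus_sq_div_sq:
  fixes t y :: real
  assumes "y > 0"
  shows "ln (1 + t\<^sup>2 / y\<^sup>2) = ln (y\<^sup>2 + t\<^sup>2) - 2 * ln y"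
proof -
  have "1 + t\<^sup>2 / y\<^sup>2 = (y\<^sup>2 + t\<^sup>2) / y\<^sup>2"
    using assms by (simp add: field_simps)
  then show ?thesis
    using assms by (simp add: ln_div add_pos_nonneg ln_realpow)
qed

lemma has_real_derivative_ln_kernel:
  fixes t y :: real
  assumes y: "y > 0"
  shows "((\<lambda>y. - ln (1 + t\<^sup>2 / y\<^sup>2) / 2) has_real_derivative ln_kernel y t) (at y)"
proof (rule has_field_derivative_transform_within_open[where S = "{0<..}"])
  have p: "y\<^sup>2 + t\<^sup>2 > 0"
    using y by (simp add: add_pos_nonneg)
  have "((\<lambda>y. ln y - ln (y\<^sup>2 + t\<^sup>2) / 2) has_real_derivative 1 / y - y / (y\<^sup>2 + t\<^sup>2)) (at y)"
    using y p by (auto intro!: derivative_eq_intros simp: power2_eq_square) (simp add: field_simps)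
  moreover have "1 / y - y / (y\<^sup>2 + t\<^sup>2) = ln_kernel y t"
    using y p unfolding ln_kernel_def by (simp add: field_simps power2_eq_square)
  ultimately show "((\<lambda>y. ln y - ln (y\<^sup>2 + t\<^sup>2) / 2) has_real_derivative ln_kernel y t) (at y)"
    by simp
qed (use y in \<open>auto simp: ln_one_plus_sq_div_sq\<close>)

lemma nn_integral_ln_kernel:
  fixes a t :: real
  assumes a: "a > 0"
  shows "(\<integral>\<^sup>+y\<in>{a<..}. ennreal (ln_kernel y t) \<partial>lborel) = ennreal (ln (1 + t\<^sup>2 / a\<^sup>2) / 2)"
proof -
  define F where "F y = - ln (1 + t\<^sup>2 / y\<^sup>2) / 2" for y :: real
  have "(\<integral>\<^sup>+y\<in>{a<..}. ennreal (ln_kernel y t) \<partial>lborel)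
      = (\<integral>\<^sup>+y. ennreal (ln_kernel y t) * indicator {a..} y \<partial>lborel)"
    by (rule nn_integral_cong_AE) (use AE_lborel_indicator_Ioi_eq_Ici[of a] in eventually_elim, simp)
  also have "\<dots> = ennreal (0 - F a)"
  proof (rule nn_integral_FTC_atLeast)
    show "(\<lambda>y. ln_kernel y t) \<in> borel_measurable borel"
      unfolding ln_kernel_def by measurable
  next
    fix y :: real assume "a \<le> y"
    then have y: "y > 0" using a by simp
    show "0 \<le> ln_kernel y t" using ln_kernel_nonneg[OF y] .
    show "(F has_real_derivative ln_kernel y t) (at y)"
      unfolding F_def using has_real_derivative_ln_kernel[OF y] .
  next
    have "((\<lambda>y. t\<^sup>2 / y\<^sup>2) \<longlongrightarrow> 0) at_top"
      by (intro tendsto_divide_0[OF tendsto_const] filterlim_at_top_imp_at_infinity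
          filterlim_pow_at_top filterlim_ident) simp
    then have "((\<lambda>y. ln (1 + t\<^sup>2 / y\<^sup>2)) \<longlongrightarrow> ln (1 + 0)) at_top"
      by (intro tendsto_ln tendsto_add tendsto_const) auto
    from tendsto_divide[OF tendsto_minus[OF this] tendsto_const[of 2]]
    show "(F \<longlongrightarrow> 0) at_top"
      unfolding F_def by simp
  qed
  also have "0 - F a = ln (1 + t\<^sup>2 / a\<^sup>2) / 2"
    unfolding F_def by simp
  finally show ?thesis .
qed

lemma nn_integral_Ioi_inverse_cube:
  fixes a :: real
  assumes a: "a > 0"
  shows "(\<integral>\<^sup>+y\<in>{a<..}. ennreal (1 / y ^ 3) \<partial>lborel) = ennreal (1 / (2 * a\<^sup>2))"
proof -
  define F where "F y = - 1 / (2 * y\<^sup>2)" for y :: real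
  have "(\<integral>\<^sup>+y\<in>{a<..}. ennreal (1 / y ^ 3) \<partial>lborel)
      = (\<integral>\<^sup>+y. ennreal (1 / y ^ 3) * indicator {a..} y \<partial>lborel)"
    by (rule nn_integral_cong_AE) (use AE_lborel_indicator_Ioi_eq_Ici[of a] in eventually_elim, simp)
  also have "\<dots> = ennreal (0 - F a)"
  proof (rule nn_integral_FTC_atLeast)
    fix y :: real assume "a \<le> y"
    then have y: "y > 0" using a by simp
    show "0 \<le> 1 / y ^ 3" using y by simp
    show "(F has_real_derivative 1 / y ^ 3) (at y)"
      unfolding F_def using y
      by (auto intro!: derivative_eq_intros simp: field_simps power2_eq_square power3_eq_cube)
  next
    have "((\<lambda>y::real. 1 / (2 * y\<^sup>2)) \<longlongrightarrow> 0) at_top"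
      by (intro tendsto_divide_0[OF tendsto_const] filterlim_at_top_imp_at_infinity
          filterlim_tendsto_pos_mult_at_top[OF tendsto_const] filterlim_pow_at_top filterlim_ident) simp_all
    then show "(F \<longlongrightarrow> 0) at_top"
      unfolding F_def using tendsto_minus by fastforce
  qed simp
  also have "0 - F a = 1 / (2 * a\<^sup>2)"
    unfolding F_def by simp
  finally show ?thesis .
qed

lemma nn_integral_Ioi_nn_integral_ln_kernel:
  fixes \<mu> :: "real measure" and f :: "real \<Rightarrow> ennreal"
  assumes \<mu>: "sigma_finite_measure \<mu>" "sets \<mu> = sets borel"
    and f[measurable]: "f \<in> borel_measurable borel" and a: "a > 0"
  shows "(\<integral>\<^sup>+y\<in>{a<..}. (\<integral>\<^sup>+t. f t * ennreal (ln_kernel y t) \<partial>\<mu>) \<partial>lborel)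
       = (\<integral>\<^sup>+t. f t * ennreal (ln (1 + t\<^sup>2 / a\<^sup>2) / 2) \<partial>\<mu>)"
proof -
  define h where "h t y = f t * ennreal (ln_kernel y t) * indicator {a<..} y" for t y :: real
  have h_measurable: "(\<lambda>(t, y). h t y) \<in> borel_measurable (borel \<Otimes>\<^sub>M borel)"
    unfolding h_def ln_kernel_def by measurable
  have "(\<integral>\<^sup>+y\<in>{a<..}. (\<integral>\<^sup>+t. f t * ennreal (ln_kernel y t) \<partial>\<mu>) \<partial>lborel)
      = (\<integral>\<^sup>+y. (\<integral>\<^sup>+t. h t y \<partial>\<mu>) \<partial>lborel)"
    unfolding h_def using \<mu>(2)
    by (intro nn_integral_cong nn_integral_multc[symmetric])
      (simp add: measurable_cong_sets[OF \<mu>(2) refl] ln_kernel_def)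
  also have "\<dots> = (\<integral>\<^sup>+t. (\<integral>\<^sup>+y. h t y \<partial>lborel) \<partial>\<mu>)"
    by (rule nn_integral_lborel_swap[OF \<mu> h_measurable])
  also have "\<dots> = (\<integral>\<^sup>+t. f t * ennreal (ln (1 + t\<^sup>2 / a\<^sup>2) / 2) \<partial>\<mu>)"
    unfolding h_def
    by (simp add: mult.assoc nn_integral_cmult ln_kernel_def nn_integral_ln_kernel[OF a, unfolded ln_kernel_def])
  finally show ?thesis .
qed

lemma ln_one_plus_div_le:
  fixes a b u :: real
  assumes "a > 0" "b > 0" "u \<ge> 0"
  shows "ln (1 + u / a) \<le> ln (1 + u / b) + ln (1 + b / a)"
proof -
  have "1 + u / a \<le> (1 + u / b) * (1 + b / a)"
    using assms by (simp add: field_simps)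
  moreover have "0 < 1 + u / a" "0 < 1 + u / b" "0 < 1 + b / a"
    using assms by (simp_all add: add_pos_nonneg)
  ultimately have "ln (1 + u / a) \<le> ln ((1 + u / b) * (1 + b / a))"
    by (intro ln_mono) auto
  also have "\<dots> = ln (1 + u / b) + ln (1 + b / a)"
    using \<open>0 < 1 + u / b\<close> \<open>0 < 1 + b / a\<close> by (rule ln_mult_pos)
  finally show ?thesis .
qed

lemma ln_one_plus_sq_le_split:
  fixes t M S :: real
  assumes "S > 0"
  shows "ennreal (ln (1 + t\<^sup>2)) \<le> 2 * (indicator {t. 2 * M \<le> \<bar>t\<bar>} t * ennreal (ln (1 + t\<^sup>2 / S\<^sup>2) / 2))
      + ennreal (ln (1 + S\<^sup>2) + ln (1 + 4 * M\<^sup>2))"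
proof (cases "2 * M \<le> \<bar>t\<bar>")
  case True
  define a where "a = ln (1 + t\<^sup>2 / S\<^sup>2) / 2"
  have a: "0 \<le> a"
    unfolding a_def using assms by simp
  have "ln (1 + t\<^sup>2) \<le> ln (1 + t\<^sup>2 / S\<^sup>2) + ln (1 + S\<^sup>2)"
    using ln_one_plus_div_le[of 1 "S\<^sup>2" "t\<^sup>2"] assms by simp
  also have "\<dots> \<le> 2 * a + (ln (1 + S\<^sup>2) + ln (1 + 4 * M\<^sup>2))"
    unfolding a_def by simp
  finally have "ennreal (ln (1 + t\<^sup>2)) \<le> ennreal (2 * a + (ln (1 + S\<^sup>2) + ln (1 + 4 * M\<^sup>2)))"
    by (rule ennreal_leI)
  also have "\<dots> = 2 * ennreal a + ennreal (ln (1 + S\<^sup>2) + ln (1 + 4 * M\<^sup>2))"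
    using a by (simp add: ennreal_plus ennreal_mult)
  finally show ?thesis
    using True unfolding a_def by simp
next
  case False
  then have "\<bar>t\<bar>\<^sup>2 \<le> (2 * M)\<^sup>2"
    by (intro power_mono) auto
  then have "ln (1 + t\<^sup>2) \<le> ln (1 + S\<^sup>2) + ln (1 + 4 * M\<^sup>2)"
    by (simp add: power_mult_distrib add_pos_nonneg add_increasing)
  then have "ennreal (ln (1 + t\<^sup>2)) \<le> ennreal (ln (1 + S\<^sup>2) + ln (1 + 4 * M\<^sup>2))"
    by (rule ennreal_leI)
  then show ?thesis
    using False by (simp del: ennreal_plus)
qed

lemma nn_integral_ln_rescaled_less_top_iff:
  fixes N :: "real measure" and c :: real
  assumes N: "finite_measure N" "sets N = sets borel" and c: "c > 0"
  shows "(\<integral>\<^sup>+x. ennreal (ln (1 + x\<^sup>2 / c) / 2) \<partial>N) < \<infinity>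
     \<longleftrightarrow> (\<integral>\<^sup>+x. ennreal (ln (1 + x\<^sup>2)) \<partial>N) < \<infinity>"
proof
  have ln_nonneg: "0 \<le> ln (1 + x\<^sup>2 / c)" "0 \<le> ln (1 + 1 / c)" "0 \<le> ln (1 + c)" for x
    using c by simp_all
  show "(\<integral>\<^sup>+x. ennreal (ln (1 + x\<^sup>2)) \<partial>N) < \<infinity>"
    if "(\<integral>\<^sup>+x. ennreal (ln (1 + x\<^sup>2 / c) / 2) \<partial>N) < \<infinity>"
  proof (rule nn_integral_less_top_if_le_affine[OF N(1) _ _ _ _ that])
    fix x :: real
    define L where "L = ln (1 + x\<^sup>2 / c) / 2"
    have "ln (1 + x\<^sup>2) \<le> 2 * L + ln (1 + c)"
      using ln_one_plus_div_le[OF zero_less_one c, of "x\<^sup>2"] unfolding L_def by simp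
    then have "ennreal (ln (1 + x\<^sup>2)) \<le> ennreal (2 * L + ln (1 + c))"
      by (rule ennreal_leI)
    also have "\<dots> = 2 * ennreal L + ennreal (ln (1 + c))"
    proof -
      have "0 \<le> L" using c unfolding L_def by simp
      then show ?thesis using ln_nonneg(3) by (simp add: ennreal_plus ennreal_mult)
    qed
    finally show "ennreal (ln (1 + x\<^sup>2)) \<le> 2 * ennreal (ln (1 + x\<^sup>2 / c) / 2) + ennreal (ln (1 + c))"
      unfolding L_def .
  qed (use N(2) in auto)
  show "(\<integral>\<^sup>+x. ennreal (ln (1 + x\<^sup>2 / c) / 2) \<partial>N) < \<infinity>"
    if "(\<integral>\<^sup>+x. ennreal (ln (1 + x\<^sup>2)) \<partial>N) < \<infinity>"
  proof (rule nn_integral_less_top_if_le_affine[OF N(1) _ _ _ _ that])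
    fix x :: real
    have "ln (1 + x\<^sup>2 / c) / 2 \<le> ln (1 + x\<^sup>2) + ln (1 + 1 / c)"
      using ln_one_plus_div_le[OF c zero_less_one, of "x\<^sup>2"] ln_nonneg(1)[of x]
        ln_ge_zero[of "1 + x\<^sup>2"] by simp
    then show "ennreal (ln (1 + x\<^sup>2 / c) / 2) \<le> 1 * ennreal (ln (1 + x\<^sup>2)) + ennreal (ln (1 + 1 / c))"
      using ln_nonneg by (simp add: ennreal_leI flip: ennreal_plus)
  qed (use N(2) in auto)
qed

section \<open>The Voiculescu transform on the imaginary axis\<close>

lemma norm_phi_integrand_le:
  fixes z :: complex and x :: real
  assumes z: "Im z > 0"
  shows "norm ((1 + x * z) / (z - x)) \<le> norm (1 + z\<^sup>2) / Im z + norm z"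
proof -
  have zx: "Im z \<le> norm (z - x)"
    using abs_Im_le_cmod[of "z - x"] z by simp
  then have zx0: "z - x \<noteq> 0"
    using z by auto
  have "(1 + x * z) / (z - x) = (1 + z\<^sup>2) / (z - x) - z"
    using zx0 by (simp add: field_simps power2_eq_square)
  then have "norm ((1 + x * z) / (z - x)) \<le> norm (1 + z\<^sup>2) / norm (z - x) + norm z"
    using norm_triangle_ineq4[of "(1 + z\<^sup>2) / (z - x)" z] by (simp add: norm_divide)
  also have "norm (1 + z\<^sup>2) / norm (z - x) \<le> norm (1 + z\<^sup>2) / Im z"
    using zx z by (intro divide_left_mono mult_pos_pos) auto
  finally show ?thesis by simp
qed

lemma integrable_phi_integrand:
  fixes \<sigma> :: "real measure"
  assumes "finite_measure \<sigma>" and sets: "sets \<sigma> = sets borel" and z: "Im z > 0"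
  shows "integrable \<sigma> (\<lambda>x. (1 + x * z) / (z - x))"
proof -
  interpret finite_measure \<sigma> by fact
  show ?thesis
    using norm_phi_integrand_le[OF z]
    by (intro integrable_const_bound[where B = "norm (1 + z\<^sup>2) / Im z + norm z"])
      (auto simp: measurable_cong_sets[OF sets refl])
qed

lemma phi_integrand_imag_axis:
  fixes x y :: real
  shows "Im ((1 + x * (\<i> * y)) / (\<i> * y - x)) = - (y * (1 + x\<^sup>2) / (x\<^sup>2 + y\<^sup>2))"
    and "Re ((1 + x * (\<i> * y)) / (\<i> * y - x)) = x * (y\<^sup>2 - 1) / (x\<^sup>2 + y\<^sup>2)"
  by (simp_all add: Im_divide Re_divide power2_eq_square field_simps)
    (simp add: minus_divide_left algebra_simps)

lemma Im_phi_repr_imag_axis: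
  fixes \<sigma> :: "real measure" and y :: real
  assumes "finite_measure \<sigma>" "sets \<sigma> = sets borel" and "y > 0"
  shows "- Im (phi_repr \<gamma> \<sigma> (\<i> * y)) = (\<integral>x. y * (1 + x\<^sup>2) / (x\<^sup>2 + y\<^sup>2) \<partial>\<sigma>)"
  using integral_Im[OF integrable_phi_integrand[OF assms(1,2), of "\<i> * y"]] assms(3)
  by (simp add: phi_repr_def phi_integrand_imag_axis)

lemma Re_phi_integrand_imag_axis_le:
  fixes x y :: real
  assumes y: "y \<ge> 1"
  shows "\<bar>Re ((1 + x * (\<i> * y)) / (\<i> * y - x))\<bar> \<le> y"
proof -
  have p: "0 < x\<^sup>2 + y\<^sup>2"
    using y by (simp add: add_nonneg_pos)
  have "2 * \<bar>x\<bar> * y \<le> x\<^sup>2 + y\<^sup>2" "0 \<le> \<bar>x\<bar> * y"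
    using y sum_squares_bound[of "\<bar>x\<bar>" y] by (simp_all add: power2_abs)
  then have "\<bar>x\<bar> / (x\<^sup>2 + y\<^sup>2) \<le> 1 / y"
    using p y by (simp add: field_simps)
  moreover have "\<bar>y\<^sup>2 - 1\<bar> \<le> y\<^sup>2"
    using y by (simp add: one_le_power)
  ultimately have "\<bar>x\<bar> / (x\<^sup>2 + y\<^sup>2) * \<bar>y\<^sup>2 - 1\<bar> \<le> 1 / y * y\<^sup>2"
    using y by (intro mult_mono) auto
  also have "\<dots> = y"
    using y by (simp add: power2_eq_square)
  finally show ?thesis
    by (simp add: phi_integrand_imag_axis abs_mult)
qed

lemma Re_phi_repr_imag_axis_le:
  fixes \<sigma> :: "real measure" and y :: real
  assumes "finite_measure \<sigma>" and sets: "sets \<sigma> = sets borel" and y: "y \<ge> 1"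
  shows "\<bar>Re (phi_repr \<gamma> \<sigma> (\<i> * y))\<bar> \<le> \<bar>\<gamma>\<bar> + measure \<sigma> (space \<sigma>) * y"
proof -
  interpret finite_measure \<sigma> by fact
  define h where "h x = (1 + x * (\<i> * y)) / (\<i> * y - x)" for x :: real
  have h: "integrable \<sigma> h"
    unfolding h_def using y by (intro integrable_phi_integrand[OF assms(1) sets]) simp
  have "\<bar>\<integral>x. Re (h x) \<partial>\<sigma>\<bar> \<le> (\<integral>x. \<bar>Re (h x)\<bar> \<partial>\<sigma>)"
    by (rule integral_abs_bound)
  also have "\<dots> \<le> (\<integral>x. y \<partial>\<sigma>)"
    using integrable_bounded_linear[OF bounded_linear_Re h] Re_phi_integrand_imag_axis_le[OF y]
    by (intro integral_mono) (auto simp: h_def)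
  finally have "\<bar>\<integral>x. Re (h x) \<partial>\<sigma>\<bar> \<le> measure \<sigma> (space \<sigma>) * y"
    by simp
  then show ?thesis
    using integral_Re[OF h] by (simp add: phi_repr_def h_def[symmetric])
qed

lemma integrable_Im_phi_integrand_imag_axis:
  fixes \<sigma> :: "real measure" and y :: real
  assumes "finite_measure \<sigma>" "sets \<sigma> = sets borel" and "y > 0"
  shows "integrable \<sigma> (\<lambda>x. y * (1 + x\<^sup>2) / (x\<^sup>2 + y\<^sup>2))"
proof -
  have "integrable \<sigma> (\<lambda>x. - Im ((1 + x * (\<i> * y)) / (\<i> * y - x)))"
    using assms by (intro integrable_minus integrable_bounded_linear[OF bounded_linear_Im]
        integrable_phi_integrand) auto
  then show ?thesis by (simp add: phi_integrand_imag_axis)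
qed

lemma integral_one_plus_sq_div_tendsto_0:
  fixes \<sigma> :: "real measure"
  assumes "finite_measure \<sigma>" and sets: "sets \<sigma> = sets borel"
  shows "((\<lambda>y. \<integral>x. (1 + x\<^sup>2) / (x\<^sup>2 + y\<^sup>2) \<partial>\<sigma>) \<longlongrightarrow> 0) at_top"
proof -
  interpret finite_measure \<sigma> by fact
  have "((\<lambda>y. \<integral>x. (1 + x\<^sup>2) / (x\<^sup>2 + y\<^sup>2) \<partial>\<sigma>) \<longlongrightarrow> (\<integral>x. 0 \<partial>\<sigma>)) at_top"
  proof (rule integral_dominated_convergence_at_top[where w = "\<lambda>_. 1"])
    show "AE x in \<sigma>. ((\<lambda>y. (1 + x\<^sup>2) / (x\<^sup>2 + y\<^sup>2)) \<longlongrightarrow> 0) at_top"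
    proof (rule AE_I2)
      fix x :: real
      have "filterlim (\<lambda>y::real. x\<^sup>2 + y\<^sup>2) at_top at_top"
        by (intro filterlim_tendsto_add_at_top[OF tendsto_const] filterlim_pow_at_top filterlim_ident) simp
      then show "((\<lambda>y. (1 + x\<^sup>2) / (x\<^sup>2 + y\<^sup>2)) \<longlongrightarrow> 0) at_top"
        by (intro tendsto_divide_0[OF tendsto_const] filterlim_at_top_imp_at_infinity)
    qed
    show "\<forall>\<^sub>F y in at_top. AE x in \<sigma>. norm ((1 + x\<^sup>2) / (x\<^sup>2 + y\<^sup>2)) \<le> 1"
      using eventually_ge_at_top[of "1::real"]
    proof eventually_elim
      case (elim y)
      then have "1 \<le> y\<^sup>2" by (simp add: one_le_power)
      moreover have "0 < x\<^sup>2 + y\<^sup>2" if "1 \<le> y\<^sup>2" for x :: real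
        using that by (intro add_nonneg_pos) auto
      ultimately show ?case by (intro AE_I2) (simp add: divide_le_eq_1)
    qed
  qed (auto simp: measurable_cong_sets[OF sets refl])
  then show ?thesis by simp
qed

lemma phi_repr_imag_axis_bounds:
  fixes \<sigma> :: "real measure" and y :: real
  assumes \<sigma>: "finite_measure \<sigma>" "sets \<sigma> = sets borel" and y: "y \<ge> 1"
    and small: "(\<integral>x. (1 + x\<^sup>2) / (x\<^sup>2 + y\<^sup>2) \<partial>\<sigma>) \<le> 1 / 2"
  shows "y / 2 \<le> y + Im (phi_repr \<gamma> \<sigma> (\<i> * y))" "y + Im (phi_repr \<gamma> \<sigma> (\<i> * y)) \<le> y"
    and "\<bar>Re (phi_repr \<gamma> \<sigma> (\<i> * y))\<bar> \<le> (\<bar>\<gamma>\<bar> + measure \<sigma> (space \<sigma>)) * y"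
proof -
  define S where "S = (\<integral>x. (1 + x\<^sup>2) / (x\<^sup>2 + y\<^sup>2) \<partial>\<sigma>)"
  have "0 \<le> S"
    unfolding S_def by (rule integral_nonneg_AE) (simp add: add_nonneg_nonneg)
  moreover have "- Im (phi_repr \<gamma> \<sigma> (\<i> * y)) = y * S"
    using y integral_mult_right_zero[of \<sigma> y "\<lambda>x. (1 + x\<^sup>2) / (x\<^sup>2 + y\<^sup>2)"]
    by (simp add: Im_phi_repr_imag_axis[OF \<sigma>] S_def)
  moreover have "0 \<le> y * S" "y * S \<le> y * (1 / 2)"
    using \<open>0 \<le> S\<close> small y unfolding S_def[symmetric] by (simp_all add: mult_left_mono)
  ultimately show "y / 2 \<le> y + Im (phi_repr \<gamma> \<sigma> (\<i> * y))" "y + Im (phi_repr \<gamma> \<sigma> (\<i> * y)) \<le> y"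
    by linarith+
  have "\<bar>\<gamma>\<bar> \<le> \<bar>\<gamma>\<bar> * y"
    using y by (simp add: mult_le_cancel_left1)
  then show "\<bar>Re (phi_repr \<gamma> \<sigma> (\<i> * y))\<bar> \<le> (\<bar>\<gamma>\<bar> + measure \<sigma> (space \<sigma>)) * y"
    using Re_phi_repr_imag_axis_le[OF \<sigma> y, of \<gamma>] by (simp add: distrib_right)
qed

lemma borel_measurable_phi_repr:
  fixes \<sigma> :: "real measure"
  assumes "finite_measure \<sigma>" "sets \<sigma> = sets borel"
  shows "phi_repr \<gamma> \<sigma> \<in> borel_measurable borel"
proof -
  have "(\<lambda>z::complex. \<integral>x. (1 + x * z) / (z - x) \<partial>\<sigma>) \<in> borel_measurable borel"
    by (rule borel_measurable_integral_param[OF finite_measure.axioms(1)[OF assms(1)] assms(2)])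
      measurable
  then show ?thesis
    unfolding phi_repr_def[abs_def] by (intro borel_measurable_add) auto
qed

lemma ennreal_minus_Im_phi_repr_div_sq:
  fixes \<sigma> :: "real measure" and y :: real
  assumes \<sigma>: "finite_measure \<sigma>" "sets \<sigma> = sets borel" and y: "y > 0"
  shows "ennreal (- Im (phi_repr \<gamma> \<sigma> (\<i> * y)) / y\<^sup>2)
       = (\<integral>\<^sup>+x. ennreal ((1 + x\<^sup>2) / (y * (x\<^sup>2 + y\<^sup>2))) \<partial>\<sigma>)"
proof -
  have eq: "y * (1 + x\<^sup>2) / (x\<^sup>2 + y\<^sup>2) / y\<^sup>2 = (1 + x\<^sup>2) / (y * (x\<^sup>2 + y\<^sup>2))" for x
    using y by (simp add: power2_eq_square)
  have "- Im (phi_repr \<gamma> \<sigma> (\<i> * y)) / y\<^sup>2 = (\<integral>x. (1 + x\<^sup>2) / (y * (x\<^sup>2 + y\<^sup>2)) \<partial>\<sigma>)"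
    unfolding Im_phi_repr_imag_axis[OF \<sigma> y] eq[symmetric] by (rule integral_divide_zero[symmetric])
  also have "ennreal \<dots> = (\<integral>\<^sup>+x. ennreal ((1 + x\<^sup>2) / (y * (x\<^sup>2 + y\<^sup>2))) \<partial>\<sigma>)"
  proof (rule nn_integral_eq_integral[symmetric])
    show "integrable \<sigma> (\<lambda>x. (1 + x\<^sup>2) / (y * (x\<^sup>2 + y\<^sup>2)))"
      using integrable_divide[OF integrable_Im_phi_integrand_imag_axis[OF \<sigma> y], of "y\<^sup>2"]
      unfolding eq .
  qed (use y in \<open>simp add: add_nonneg_nonneg\<close>)
  finally show ?thesis .
qed

lemma ennreal_minus_Im_phi_repr_div_sq_le:
  fixes \<sigma> :: "real measure" and T y :: real
  assumes \<sigma>: "finite_measure \<sigma>" "sets \<sigma> = sets borel" and T: "0 < T" "T < y"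
  shows "ennreal (- Im (phi_repr \<gamma> \<sigma> (\<i> * y)) / y\<^sup>2)
       \<le> ennreal ((1 + 1 / T\<^sup>2) / T * measure \<sigma> (space \<sigma>))"
proof -
  interpret finite_measure \<sigma> by fact
  have y: "y > 0"
    using T by simp
  have "(1 + x\<^sup>2) / (y * (x\<^sup>2 + y\<^sup>2)) \<le> (1 + 1 / T\<^sup>2) / T" for x :: real
  proof -
    have p: "0 < x\<^sup>2 + y\<^sup>2"
      using y by (simp add: add_nonneg_pos)
    have "1 / (x\<^sup>2 + y\<^sup>2) \<le> 1 / T\<^sup>2"
      using T p by (intro divide_left_mono add_increasing power_mono mult_pos_pos) auto
    moreover have "x\<^sup>2 / (x\<^sup>2 + y\<^sup>2) \<le> 1"
      using p by simp
    ultimately have "(1 + x\<^sup>2) / (x\<^sup>2 + y\<^sup>2) \<le> 1 + 1 / T\<^sup>2"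
      by (simp add: add_divide_distrib)
    then have "(1 + x\<^sup>2) / (x\<^sup>2 + y\<^sup>2) / y \<le> (1 + 1 / T\<^sup>2) / T"
      using T p by (intro frac_le) (auto simp: add_nonneg_nonneg)
    then show ?thesis
      by (simp add: mult.commute)
  qed
  then have "(\<integral>\<^sup>+x. ennreal ((1 + x\<^sup>2) / (y * (x\<^sup>2 + y\<^sup>2))) \<partial>\<sigma>) \<le> (\<integral>\<^sup>+x. ennreal ((1 + 1 / T\<^sup>2) / T) \<partial>\<sigma>)"
    by (intro nn_integral_mono ennreal_leI)
  also have "\<dots> = ennreal ((1 + 1 / T\<^sup>2) / T) * ennreal (measure \<sigma> (space \<sigma>))"
    by (simp add: emeasure_eq_measure)
  also have "\<dots> = ennreal ((1 + 1 / T\<^sup>2) / T * measure \<sigma> (space \<sigma>))"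
    using T by (subst ennreal_mult) (auto simp: add_nonneg_nonneg)
  finally show ?thesis
    unfolding ennreal_minus_Im_phi_repr_div_sq[OF \<sigma> y] .
qed

lemma nn_integral_Ioi_phi_kernel:
  fixes T x :: real
  assumes T: "T > 0"
  obtains R where "R \<le> ennreal (1 / (2 * T\<^sup>2))"
    and "(\<integral>\<^sup>+y\<in>{T<..}. ennreal ((1 + x\<^sup>2) / (y * (x\<^sup>2 + y\<^sup>2))) \<partial>lborel)
       = ennreal (ln (1 + x\<^sup>2 / T\<^sup>2) / 2) + R"
proof
  define R where "R = (\<integral>\<^sup>+y\<in>{T<..}. ennreal (1 / (y * (y\<^sup>2 + x\<^sup>2))) \<partial>lborel)"
  have "ennreal ((1 + x\<^sup>2) / (y * (x\<^sup>2 + y\<^sup>2))) * indicator {T<..} y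
      = ennreal (ln_kernel y x) * indicator {T<..} y + ennreal (1 / (y * (y\<^sup>2 + x\<^sup>2))) * indicator {T<..} y"
    for y
  proof (cases "T < y")
    case True
    then have "0 < y" "0 < y * (y\<^sup>2 + x\<^sup>2)"
      using T by (simp_all add: add_pos_nonneg)
    then show ?thesis
      unfolding ln_kernel_def using True
      by (simp add: ennreal_plus[symmetric] add_divide_distrib add.commute del: ennreal_plus)
  qed simp
  then show "(\<integral>\<^sup>+y\<in>{T<..}. ennreal ((1 + x\<^sup>2) / (y * (x\<^sup>2 + y\<^sup>2))) \<partial>lborel)
      = ennreal (ln (1 + x\<^sup>2 / T\<^sup>2) / 2) + R"
    unfolding R_def nn_integral_ln_kernel[OF T, symmetric]
    by (simp add: nn_integral_add ln_kernel_def)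
  have "R \<le> (\<integral>\<^sup>+y\<in>{T<..}. ennreal (1 / y ^ 3) \<partial>lborel)"
    unfolding R_def
  proof (intro nn_integral_mono)
    fix y :: real
    show "ennreal (1 / (y * (y\<^sup>2 + x\<^sup>2))) * indicator {T<..} y \<le> ennreal (1 / y ^ 3) * indicator {T<..} y"
    proof (cases "T < y")
      case True
      then have "0 < y" using T by simp
      then have "1 / (y * (y\<^sup>2 + x\<^sup>2)) \<le> 1 / y ^ 3"
        by (intro divide_left_mono) (auto simp: power3_eq_cube power2_eq_square add_pos_nonneg)
      then show ?thesis using True by (simp add: ennreal_leI)
    qed simp
  qed
  then show "R \<le> ennreal (1 / (2 * T\<^sup>2))"
    unfolding nn_integral_Ioi_inverse_cube[OF T] .
qed

lemma nn_integral_phi_imag_axis_swap: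
  fixes \<sigma> :: "real measure" and \<gamma> T :: real
  assumes \<sigma>: "finite_measure \<sigma>" "sets \<sigma> = sets borel" and T: "T > 0"
  shows "(\<integral>\<^sup>+y\<in>{T<..}. ennreal (- Im (phi_repr \<gamma> \<sigma> (\<i> * y)) / y\<^sup>2) \<partial>lborel)
       = (\<integral>\<^sup>+x. (\<integral>\<^sup>+y\<in>{T<..}. ennreal ((1 + x\<^sup>2) / (y * (x\<^sup>2 + y\<^sup>2))) \<partial>lborel) \<partial>\<sigma>)"
proof -
  define k where "k x y = ennreal ((1 + x\<^sup>2) / (y * (x\<^sup>2 + y\<^sup>2))) * indicator {T<..} y" for x y :: real
  have k_measurable: "(\<lambda>(x, y). k x y) \<in> borel_measurable (borel \<Otimes>\<^sub>M borel)"
    unfolding k_def by measurable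
  have "(\<integral>\<^sup>+y\<in>{T<..}. ennreal (- Im (phi_repr \<gamma> \<sigma> (\<i> * y)) / y\<^sup>2) \<partial>lborel)
      = (\<integral>\<^sup>+y. (\<integral>\<^sup>+x. k x y \<partial>\<sigma>) \<partial>lborel)"
  proof (rule nn_integral_cong)
    fix y :: real
    show "ennreal (- Im (phi_repr \<gamma> \<sigma> (\<i> * y)) / y\<^sup>2) * indicator {T<..} y = (\<integral>\<^sup>+x. k x y \<partial>\<sigma>)"
    proof (cases "T < y")
      case True
      then show ?thesis
        using T ennreal_minus_Im_phi_repr_div_sq[OF \<sigma>, of y \<gamma>] unfolding k_def by simp
    qed (simp add: k_def)
  qed
  also have "\<dots> = (\<integral>\<^sup>+x. (\<integral>\<^sup>+y. k x y \<partial>lborel) \<partial>\<sigma>)"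
    using \<sigma> k_measurable by (intro nn_integral_lborel_swap) (auto intro: finite_measure.axioms)
  finally show ?thesis
    unfolding k_def .
qed

lemma nn_integral_phi_imag_axis_less_top_iff_ln:
  fixes \<sigma> :: "real measure" and \<gamma> T :: real
  assumes \<sigma>: "finite_measure \<sigma>" "sets \<sigma> = sets borel" and T: "T > 0"
  shows "(\<integral>\<^sup>+y\<in>{T<..}. ennreal (- Im (phi_repr \<gamma> \<sigma> (\<i> * y)) / y\<^sup>2) \<partial>lborel) < \<infinity>
     \<longleftrightarrow> (\<integral>\<^sup>+x. ennreal (ln (1 + x\<^sup>2)) \<partial>\<sigma>) < \<infinity>"
proof -
  define K where "K x = (\<integral>\<^sup>+y\<in>{T<..}. ennreal ((1 + x\<^sup>2) / (y * (x\<^sup>2 + y\<^sup>2))) \<partial>lborel)" for x :: real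
  define L where "L x = ennreal (ln (1 + x\<^sup>2 / T\<^sup>2) / 2)" for x :: real
  have bounds: "L x \<le> K x" "K x \<le> 1 * L x + ennreal (1 / (2 * T\<^sup>2))" for x
  proof -
    obtain R where "R \<le> ennreal (1 / (2 * T\<^sup>2))" "K x = L x + R"
      using nn_integral_Ioi_phi_kernel[OF T, of x] unfolding K_def L_def by blast
    then show "L x \<le> K x" "K x \<le> 1 * L x + ennreal (1 / (2 * T\<^sup>2))"
      by (simp_all add: add_left_mono)
  qed
  have L_measurable: "L \<in> borel_measurable \<sigma>"
    unfolding L_def measurable_cong_sets[OF \<sigma>(2) refl] by measurable
  have "(\<integral>\<^sup>+x. K x \<partial>\<sigma>) < \<infinity> \<longleftrightarrow> (\<integral>\<^sup>+x. L x \<partial>\<sigma>) < \<infinity>"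
  proof
    assume "(\<integral>\<^sup>+x. K x \<partial>\<sigma>) < \<infinity>"
    then show "(\<integral>\<^sup>+x. L x \<partial>\<sigma>) < \<infinity>"
      by (rule le_less_trans[OF nn_integral_mono[OF bounds(1)]])
  next
    assume L_finite: "(\<integral>\<^sup>+x. L x \<partial>\<sigma>) < \<infinity>"
    show "(\<integral>\<^sup>+x. K x \<partial>\<sigma>) < \<infinity>"
      by (rule nn_integral_less_top_if_le_affine[OF \<sigma>(1) L_measurable bounds(2) _ _ L_finite]) simp_all
  qed
  then show ?thesis
    unfolding nn_integral_phi_imag_axis_swap[OF \<sigma> T] K_def[symmetric] L_def
    using nn_integral_ln_rescaled_less_top_iff[OF \<sigma>, of "T\<^sup>2"] T by simp
qed

lemma Im_R_transform_imag_axis: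
  fixes y :: real
  assumes y: "y > 0"
  shows "Im (R_transform \<gamma> \<sigma> (\<i> * y)) = - Im (phi_repr \<gamma> \<sigma> (\<i> * complex_of_real (1 / y)))"
proof -
  have "\<not> Im (1 / (\<i> * y)) > 0" "cnj (1 / (\<i> * y)) = \<i> * complex_of_real (1 / y)"
    using y by (simp_all add: Im_divide complex_eq_iff Re_divide power2_eq_square)
  then show ?thesis
    unfolding R_transform_def phi_ext_def by simp
qed

lemma nn_integral_R_transform_imag_axis_eq:
  fixes \<sigma> :: "real measure" and \<gamma> T :: real
  assumes \<sigma>: "finite_measure \<sigma>" "sets \<sigma> = sets borel" and T: "T > 0"
  shows "(\<integral>\<^sup>+y\<in>{0<..<1/T}. ennreal (Im (R_transform \<gamma> \<sigma> (\<i> * y))) \<partial>lborel)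
       = (\<integral>\<^sup>+y\<in>{T<..}. ennreal (- Im (phi_repr \<gamma> \<sigma> (\<i> * y)) / y\<^sup>2) \<partial>lborel)"
proof -
  define f where "f y = ennreal (- Im (phi_repr \<gamma> \<sigma> (\<i> * complex_of_real (1 / y))))" for y :: real
  note [measurable] = borel_measurable_phi_repr[OF \<sigma>, of \<gamma>]
  have [measurable]: "f \<in> borel_measurable borel"
    unfolding f_def[abs_def] by measurable
  have "(\<integral>\<^sup>+y\<in>{0<..<1/T}. ennreal (Im (R_transform \<gamma> \<sigma> (\<i> * y))) \<partial>lborel)
      = (\<integral>\<^sup>+y\<in>{0<..<1/T}. f y \<partial>lborel)"
    by (intro nn_integral_cong) (auto simp: f_def Im_R_transform_imag_axis indicator_def)
  also have "\<dots> = (\<integral>\<^sup>+u\<in>{T<..}. f (1 / u) * ennreal (1 / u\<^sup>2) \<partial>lborel)"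
    by (rule nn_integral_Ioo_inverse_substitution[OF _ T]) measurable
  also have "\<dots> = (\<integral>\<^sup>+y\<in>{T<..}. ennreal (- Im (phi_repr \<gamma> \<sigma> (\<i> * y)) / y\<^sup>2) \<partial>lborel)"
    by (intro nn_integral_cong) (simp add: f_def ennreal_mult''[symmetric] del: ennreal_mult'')
  finally show ?thesis .
qed

section \<open>The Cauchy transform and the spread of its kernel\<close>

lemma norm_cauchy_kernel_le:
  fixes w :: complex and t :: real
  assumes "Im w > 0"
  shows "cmod (1 / (w - t)) \<le> 1 / Im w"
proof -
  have "Im w \<le> cmod (w - t)"
    using abs_Im_le_cmod[of "w - t"] assms by simp
  then show ?thesis
    using assms by (simp add: norm_divide frac_le)
qed

lemma integrable_cauchy_kernel:
  fixes \<mu> :: "real measure"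
  assumes "finite_measure \<mu>" and sets: "sets \<mu> = sets borel" and w: "Im w > 0"
  shows "integrable \<mu> (\<lambda>t. 1 / (w - t))"
proof -
  interpret finite_measure \<mu> by fact
  show ?thesis
    using norm_cauchy_kernel_le[OF w]
    by (intro integrable_const_bound[where B = "1 / Im w"]) (auto simp: measurable_cong_sets[OF sets refl])
qed

lemma Im_cauchy_kernel: "Im (1 / (w - complex_of_real t)) = - Im w * (cmod (1 / (w - t)))\<^sup>2"
  by (simp add: Im_divide' norm_divide power_one_over)

lemma Im_cauchy_transform:
  fixes \<mu> :: "real measure"
  assumes "finite_measure \<mu>" and sets: "sets \<mu> = sets borel" and w: "Im w > 0"
  shows "Im (cauchy_transform \<mu> w) = - Im w * (\<integral>t. (cmod (1 / (w - t)))\<^sup>2 \<partial>\<mu>)"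
  using integral_Im[OF integrable_cauchy_kernel[OF assms]]
  by (simp add: cauchy_transform_def Im_cauchy_kernel)

lemma norm_cauchy_transform_le:
  fixes \<mu> :: "real measure"
  assumes "prob_space \<mu>" and sets: "sets \<mu> = sets borel" and w: "Im w > 0"
  shows "cmod (cauchy_transform \<mu> w) \<le> 1 / Im w"
proof -
  interpret prob_space \<mu> by fact
  have "cmod (cauchy_transform \<mu> w) \<le> (\<integral>t. cmod (1 / (w - t)) \<partial>\<mu>)"
    unfolding cauchy_transform_def by (rule integral_norm_bound)
  also have "\<dots> \<le> (\<integral>t. 1 / Im w \<partial>\<mu>)"
    using integrable_cauchy_kernel[OF finite_measure_axioms sets w] norm_cauchy_kernel_le[OF w]
    by (intro integral_mono) auto
  finally show ?thesis
    by (simp add: prob_space)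
qed

lemma borel_measurable_cauchy_transform:
  fixes \<mu> :: "real measure"
  assumes "sigma_finite_measure \<mu>" "sets \<mu> = sets borel"
  shows "cauchy_transform \<mu> \<in> borel_measurable borel"
  unfolding cauchy_transform_def[abs_def]
  by (rule borel_measurable_integral_param[OF assms]) measurable

text \<open>Twice the variance of the Cauchy kernel \<open>t \<mapsto> 1 / (w - t)\<close> under \<open>\<mu>\<close>.\<close>

definition cauchy_kernel_spread :: "real measure \<Rightarrow> complex \<Rightarrow> ennreal" where
  "cauchy_kernel_spread \<mu> w =
     (\<integral>\<^sup>+t. (\<integral>\<^sup>+s. ennreal ((cmod (1 / (w - t) - 1 / (w - s)))\<^sup>2) \<partial>\<mu>) \<partial>\<mu>)"

lemma cauchy_kernel_spread_eq:
  fixes \<mu> :: "real measure"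
  assumes "prob_space \<mu>" and sets: "sets \<mu> = sets borel" and w: "Im w > 0"
  shows "cauchy_kernel_spread \<mu> w
      = ennreal (2 * (- Im (cauchy_transform \<mu> w) / Im w - (cmod (cauchy_transform \<mu> w))\<^sup>2))"
    and "(cmod (cauchy_transform \<mu> w))\<^sup>2 \<le> - Im (cauchy_transform \<mu> w) / Im w"
proof -
  interpret prob_space \<mu> by fact
  define k where "k t = 1 / (w - t)" for t :: real
  have k: "integrable \<mu> k"
    unfolding k_def by (rule integrable_cauchy_kernel[OF finite_measure_axioms sets w])
  have [measurable]: "(\<lambda>t. Re (k t)) \<in> borel_measurable \<mu>" "(\<lambda>t. Im (k t)) \<in> borel_measurable \<mu>"
    using k by auto
  have sq_bound: "norm ((f (k t))\<^sup>2) \<le> (1 / Im w)\<^sup>2" if "\<And>z. \<bar>f z\<bar> \<le> cmod z" for f t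
  proof -
    have "\<bar>f (k t)\<bar> \<le> 1 / Im w"
      using that[of "k t"] norm_cauchy_kernel_le[OF w, of t] unfolding k_def by linarith
    then have "\<bar>f (k t)\<bar>\<^sup>2 \<le> (1 / Im w)\<^sup>2"
      by (rule power_mono) simp
    then show ?thesis by simp
  qed
  have sq: "integrable \<mu> (\<lambda>t. (Re (k t))\<^sup>2)" "integrable \<mu> (\<lambda>t. (Im (k t))\<^sup>2)"
    using sq_bound[of Re] sq_bound[of Im] abs_Re_le_cmod abs_Im_le_cmod
    by (auto intro!: integrable_const_bound[where B = "(1 / Im w)\<^sup>2"])
  have Re_k: "integrable \<mu> (\<lambda>t. Re (k t))" and Im_k: "integrable \<mu> (\<lambda>t. Im (k t))"
    using k by auto
  define A where "A = (\<integral>t. (cmod (k t))\<^sup>2 \<partial>\<mu>)"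
  have A: "A = expectation (\<lambda>t. (Re (k t))\<^sup>2) + expectation (\<lambda>t. (Im (k t))\<^sup>2)"
    unfolding A_def cmod_power2 using sq by simp
  have G: "Re (cauchy_transform \<mu> w) = expectation (\<lambda>t. Re (k t))"
    "Im (cauchy_transform \<mu> w) = expectation (\<lambda>t. Im (k t))"
    unfolding cauchy_transform_def k_def[symmetric] using k by simp_all
  have var: "variance (\<lambda>t. Re (k t)) + variance (\<lambda>t. Im (k t)) = A - (cmod (cauchy_transform \<mu> w))\<^sup>2"
    unfolding A cmod_power2 G using Re_k Im_k sq by (simp add: variance_eq)
  have ImG: "- Im (cauchy_transform \<mu> w) / Im w = A"
    unfolding Im_cauchy_transform[OF finite_measure_axioms sets w] A_def k_def using w by simp
  have "cauchy_kernel_spread \<mu> w = (\<integral>\<^sup>+t. (\<integral>\<^sup>+s. ennreal ((Re (k t) - Re (k s))\<^sup>2)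
      + ennreal ((Im (k t) - Im (k s))\<^sup>2) \<partial>\<mu>) \<partial>\<mu>)"
    unfolding cauchy_kernel_spread_def k_def[symmetric] cmod_power2 by (simp add: ennreal_plus)
  also have "\<dots> = ennreal (2 * variance (\<lambda>t. Re (k t))) + ennreal (2 * variance (\<lambda>t. Im (k t)))"
    by (simp add: nn_integral_add nn_integral_sq_diff_eq_twice_variance sq)
  also have "\<dots> = ennreal (2 * (A - (cmod (cauchy_transform \<mu> w))\<^sup>2))"
    by (simp add: ennreal_plus[symmetric] variance_positive var[symmetric] distrib_left del: ennreal_plus)
  finally show "cauchy_kernel_spread \<mu> w
      = ennreal (2 * (- Im (cauchy_transform \<mu> w) / Im w - (cmod (cauchy_transform \<mu> w))\<^sup>2))"
    unfolding ImG .
  show "(cmod (cauchy_transform \<mu> w))\<^sup>2 \<le> - Im (cauchy_transform \<mu> w) / Im w"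
    using var variance_positive[of "\<lambda>t. Re (k t)"] variance_positive[of "\<lambda>t. Im (k t)"]
    unfolding ImG by linarith
qed

lemma cauchy_kernel_diff_sq:
  fixes w :: complex and t s :: real
  assumes "Im w > 0"
  shows "(cmod (1 / (w - t) - 1 / (w - s)))\<^sup>2 = (t - s)\<^sup>2 / ((cmod (w - t))\<^sup>2 * (cmod (w - s))\<^sup>2)"
proof -
  have "w - t \<noteq> 0" "w - s \<noteq> 0"
    using assms by (auto simp: complex_eq_iff)
  then have "1 / (w - t) - 1 / (w - s) = complex_of_real (t - s) / ((w - t) * (w - s))"
    by (simp add: field_simps)
  then show ?thesis
    by (simp add: norm_divide norm_mult power_divide power_mult_distrib del: of_real_diff)
qed

lemma borel_measurable_cauchy_kernel_spread:
  fixes \<mu> :: "real measure"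
  assumes "sigma_finite_measure \<mu>" "sets \<mu> = sets borel"
  shows "(\<lambda>t::real. \<integral>\<^sup>+s. ennreal ((cmod (1 / (w - t) - 1 / (w - s)))\<^sup>2) \<partial>\<mu>) \<in> borel_measurable borel"
    and "cauchy_kernel_spread \<mu> \<in> borel_measurable borel"
proof -
  have "(\<lambda>x. \<integral>\<^sup>+s. ennreal ((cmod (1 / (fst x - complex_of_real (snd x)) - 1 / (fst x - s)))\<^sup>2) \<partial>\<mu>)
      \<in> borel_measurable (borel \<Otimes>\<^sub>M borel)"
    by (rule borel_measurable_nn_integral_param[OF assms]) (simp add: split_beta', measurable)
  then have inner: "(\<lambda>(w, t::real). \<integral>\<^sup>+s. ennreal ((cmod (1 / (w - t) - 1 / (w - s)))\<^sup>2) \<partial>\<mu>)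
      \<in> borel_measurable (borel \<Otimes>\<^sub>M borel)"
    by (simp add: split_beta')
  show "(\<lambda>t::real. \<integral>\<^sup>+s. ennreal ((cmod (1 / (w - t) - 1 / (w - s)))\<^sup>2) \<partial>\<mu>) \<in> borel_measurable borel"
    using measurable_Pair2[OF inner, of w] by simp
  show "cauchy_kernel_spread \<mu> \<in> borel_measurable borel"
    unfolding cauchy_kernel_spread_def[abs_def]
    by (rule borel_measurable_nn_integral_param[OF assms]) (simp add: inner)
qed

lemma ennreal_mult_cauchy_kernel_spread:
  fixes \<mu> :: "real measure"
  assumes \<mu>: "sigma_finite_measure \<mu>" and sets: "sets \<mu> = sets borel" and c: "c \<ge> 0"
  shows "ennreal c * cauchy_kernel_spread \<mu> w
       = (\<integral>\<^sup>+t. (\<integral>\<^sup>+s. ennreal (c * (cmod (1 / (w - t) - 1 / (w - s)))\<^sup>2) \<partial>\<mu>) \<partial>\<mu>)"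
  using borel_measurable_cauchy_kernel_spread(1)[OF \<mu> sets] c
  unfolding cauchy_kernel_spread_def
  by (simp add: nn_integral_cmult[symmetric] measurable_cong_sets[OF sets refl] ennreal_mult)

lemma cauchy_kernel_spread_le_if_dist_le:
  fixes \<mu> :: "real measure" and w w' :: complex and C :: real
  assumes \<mu>: "sigma_finite_measure \<mu>" and sets: "sets \<mu> = sets borel"
    and w: "Im w > 0" and w': "Im w' > 0" and C: "C > 0"
    and dist_le: "\<And>t::real. (cmod (w' - t))\<^sup>2 \<le> C * (cmod (w - t))\<^sup>2"
  shows "cauchy_kernel_spread \<mu> w \<le> ennreal (C\<^sup>2) * cauchy_kernel_spread \<mu> w'"
proof -
  define d where "d v t = (cmod (v - complex_of_real t))\<^sup>2" for v t
  have d_pos: "d w t > 0" "d w' t > 0" for t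
    unfolding d_def using w w' by (auto simp: complex_eq_iff)
  have pointwise: "(cmod (1 / (w - t) - 1 / (w - s)))\<^sup>2 \<le> C\<^sup>2 * (cmod (1 / (w' - t) - 1 / (w' - s)))\<^sup>2"
    for t s :: real
  proof -
    have "d w' t * d w' s \<le> C\<^sup>2 * (d w t * d w s)"
      using mult_mono[OF dist_le[of t] dist_le[of s]] d_pos[of t] d_pos[of s] C
      unfolding d_def by (simp add: power2_eq_square mult_ac)
    then have "C\<^sup>2 * (t - s)\<^sup>2 / (C\<^sup>2 * (d w t * d w s)) \<le> C\<^sup>2 * (t - s)\<^sup>2 / (d w' t * d w' s)"
      using d_pos[of t] d_pos[of s] by (intro frac_le) auto
    moreover have "(t - s)\<^sup>2 / (d w t * d w s) = C\<^sup>2 * (t - s)\<^sup>2 / (C\<^sup>2 * (d w t * d w s))"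
      using C by simp
    ultimately have "(t - s)\<^sup>2 / (d w t * d w s) \<le> C\<^sup>2 * ((t - s)\<^sup>2 / (d w' t * d w' s))"
      by simp
    then show ?thesis
      unfolding cauchy_kernel_diff_sq[OF w] cauchy_kernel_diff_sq[OF w'] d_def .
  qed
  have "cauchy_kernel_spread \<mu> w \<le> (\<integral>\<^sup>+t. (\<integral>\<^sup>+s. ennreal (C\<^sup>2 * (cmod (1 / (w' - t) - 1 / (w' - s)))\<^sup>2) \<partial>\<mu>) \<partial>\<mu>)"
    unfolding cauchy_kernel_spread_def by (intro nn_integral_mono ennreal_leI pointwise)
  then show ?thesis
    unfolding ennreal_mult_cauchy_kernel_spread[OF \<mu> sets zero_le_power2] .
qed

section \<open>The spread on the imaginary axis and the logarithmic moment\<close>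

lemma borel_measurable_cauchy_kernel_spread_imag_axis:
  fixes \<mu> :: "real measure"
  assumes "sigma_finite_measure \<mu>" "sets \<mu> = sets borel"
  shows "(\<lambda>y::real. ennreal y * cauchy_kernel_spread \<mu> (\<i> * y)) \<in> borel_measurable borel"
  using measurable_compose[OF _ borel_measurable_cauchy_kernel_spread(2)[OF assms], of "\<lambda>y::real. \<i> * y"]
  by measurable

lemma cauchy_kernel_diff_sq_imag_axis:
  fixes y t s :: real
  assumes "y > 0"
  shows "y * (cmod (1 / (\<i> * y - t) - 1 / (\<i> * y - s)))\<^sup>2 = y * (t - s)\<^sup>2 / ((t\<^sup>2 + y\<^sup>2) * (s\<^sup>2 + y\<^sup>2))"
proof -
  have iy: "Im (\<i> * y) > 0"
    using assms by simp
  show ?thesis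
    unfolding cauchy_kernel_diff_sq[OF iy] by (simp add: cmod_power2)
qed

lemma cauchy_kernel_diff_sq_imag_axis_le:
  fixes y t s :: real
  assumes y: "y > 0"
  shows "y * (cmod (1 / (\<i> * y - t) - 1 / (\<i> * y - s)))\<^sup>2 \<le> 2 * ln_kernel y t + 2 * ln_kernel y s"
proof -
  define a b where "a = t\<^sup>2 + y\<^sup>2" and "b = s\<^sup>2 + y\<^sup>2"
  have a: "a > 0" and b: "b > 0"
    unfolding a_def b_def using y by (simp_all add: add_nonneg_pos)
  have "y * y \<le> a" "y * y \<le> b"
    unfolding a_def b_def by (simp_all add: power2_eq_square)
  then have ya: "y / a \<le> 1 / y" and yb: "y / b \<le> 1 / y"
    using y a b by (simp_all add: field_simps)
  have "(t - s)\<^sup>2 \<le> 2 * t\<^sup>2 + 2 * s\<^sup>2"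
    using zero_le_power2[of "t + s"] by (simp add: power2_diff power2_sum)
  then have "y * (t - s)\<^sup>2 / (a * b) \<le> (2 * t\<^sup>2 + 2 * s\<^sup>2) * y / (a * b)"
    using y a b by (intro divide_right_mono) (auto simp: mult.commute)
  also have "\<dots> = 2 * (t\<^sup>2 / a) * (y / b) + 2 * (s\<^sup>2 / b) * (y / a)"
    using a b by (simp add: field_simps)
  also have "\<dots> \<le> 2 * (t\<^sup>2 / a) * (1 / y) + 2 * (s\<^sup>2 / b) * (1 / y)"
    using ya yb a b by (intro add_mono mult_left_mono) auto
  also have "\<dots> = 2 * ln_kernel y t + 2 * ln_kernel y s"
    unfolding ln_kernel_def a_def b_def by (simp add: field_simps add.commute)
  finally show ?thesis
    unfolding cauchy_kernel_diff_sq_imag_axis[OF y] a_def b_def .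
qed

lemma cauchy_kernel_diff_sq_imag_axis_ge:
  fixes y t s M :: real
  assumes y: "y > 0" and s: "\<bar>s\<bar> \<le> M" and t: "2 * M \<le> \<bar>t\<bar>" and M: "M \<le> y"
  shows "ln_kernel y t / 8 \<le> y * (cmod (1 / (\<i> * y - t) - 1 / (\<i> * y - s)))\<^sup>2"
proof -
  define a where "a = t\<^sup>2 + y\<^sup>2"
  have a: "a > 0"
    unfolding a_def using y by (simp add: add_nonneg_pos)
  have "\<bar>t\<bar> / 2 \<le> \<bar>t - s\<bar>"
    using abs_triangle_ineq2[of t s] s t by linarith
  then have "(\<bar>t\<bar> / 2)\<^sup>2 \<le> \<bar>t - s\<bar>\<^sup>2"
    by (rule power_mono) simp
  then have ts: "t\<^sup>2 / 4 \<le> (t - s)\<^sup>2"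
    by (simp add: power_divide)
  have "\<bar>s\<bar> \<le> y"
    using s M by linarith
  then have "\<bar>s\<bar>\<^sup>2 \<le> y\<^sup>2"
    by (rule power_mono) simp
  then have sy: "s\<^sup>2 + y\<^sup>2 \<le> 2 * y\<^sup>2"
    by simp
  have "ln_kernel y t = t\<^sup>2 / (y * a)"
    unfolding ln_kernel_def a_def by (simp add: add.commute)
  also have "\<dots> / 8 = y * (t\<^sup>2 / 4) / (a * (2 * y\<^sup>2))"
    using y a by (simp add: field_simps power2_eq_square)
  finally have "ln_kernel y t / 8 = y * (t\<^sup>2 / 4) / (a * (2 * y\<^sup>2))" .
  also have "\<dots> \<le> y * (t - s)\<^sup>2 / (a * (s\<^sup>2 + y\<^sup>2))"
    using ts sy y a by (intro frac_le mult_left_mono mult_pos_pos add_nonneg_pos) auto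
  finally show ?thesis
    unfolding cauchy_kernel_diff_sq_imag_axis[OF y] a_def .
qed

lemma cauchy_kernel_spread_imag_axis_le:
  fixes \<mu> :: "real measure"
  assumes "prob_space \<mu>" and sets: "sets \<mu> = sets borel" and y: "y > 0"
  shows "ennreal y * cauchy_kernel_spread \<mu> (\<i> * y) \<le> 4 * (\<integral>\<^sup>+t. ennreal (ln_kernel y t) \<partial>\<mu>)"
proof -
  interpret prob_space \<mu> by fact
  define H where "H = (\<integral>\<^sup>+t. ennreal (ln_kernel y t) \<partial>\<mu>)"
  have [measurable]: "(\<lambda>t. ennreal (ln_kernel y t)) \<in> borel_measurable \<mu>"
    unfolding measurable_cong_sets[OF sets refl] ln_kernel_def by measurable
  have "ennreal y * cauchy_kernel_spread \<mu> (\<i> * y)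
      \<le> (\<integral>\<^sup>+t. (\<integral>\<^sup>+s. 2 * ennreal (ln_kernel y t) + 2 * ennreal (ln_kernel y s) \<partial>\<mu>) \<partial>\<mu>)"
    unfolding ennreal_mult_cauchy_kernel_spread[OF prob_space_imp_sigma_finite[OF \<open>prob_space \<mu>\<close>] sets
        less_imp_le[OF y]]
  proof (intro nn_integral_mono)
    fix t s :: real
    have "ennreal (y * (cmod (1 / (\<i> * y - t) - 1 / (\<i> * y - s)))\<^sup>2)
        \<le> ennreal (2 * ln_kernel y t + 2 * ln_kernel y s)"
      by (rule ennreal_leI[OF cauchy_kernel_diff_sq_imag_axis_le[OF y]])
    also have "\<dots> = 2 * ennreal (ln_kernel y t) + 2 * ennreal (ln_kernel y s)"
      using ln_kernel_nonneg[OF y] by (simp add: ennreal_plus ennreal_mult)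
    finally show "ennreal (y * (cmod (1 / (\<i> * y - t) - 1 / (\<i> * y - s)))\<^sup>2)
        \<le> 2 * ennreal (ln_kernel y t) + 2 * ennreal (ln_kernel y s)" .
  qed
  also have "\<dots> = (\<integral>\<^sup>+t. 2 * ennreal (ln_kernel y t) + 2 * H \<partial>\<mu>)"
    unfolding H_def by (simp add: nn_integral_add nn_integral_cmult emeasure_space_1)
  also have "\<dots> = 4 * H"
    unfolding H_def by (simp add: nn_integral_add nn_integral_cmult emeasure_space_1 distrib_right[symmetric])
  finally show ?thesis
    unfolding H_def .
qed

lemma cauchy_kernel_spread_imag_axis_le_inverse:
  fixes \<mu> :: "real measure"
  assumes \<mu>: "prob_space \<mu>" "sets \<mu> = sets borel" and y: "y > 0"
  shows "ennreal y * cauchy_kernel_spread \<mu> (\<i> * y) \<le> ennreal (4 / y)"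
proof -
  interpret prob_space \<mu> by fact
  have "(\<integral>\<^sup>+t. ennreal (ln_kernel y t) \<partial>\<mu>) \<le> (\<integral>\<^sup>+t. ennreal (1 / y) \<partial>\<mu>)"
    by (intro nn_integral_mono ennreal_leI ln_kernel_le[OF y])
  then have "4 * (\<integral>\<^sup>+t. ennreal (ln_kernel y t) \<partial>\<mu>) \<le> 4 * ennreal (1 / y)"
    by (simp add: emeasure_space_1 mult_left_mono)
  also have "\<dots> = ennreal (4 * (1 / y))"
    using y by (subst ennreal_mult) auto
  also have "\<dots> = ennreal (4 / y)"
    by simp
  finally show ?thesis
    using cauchy_kernel_spread_imag_axis_le[OF \<mu> y] by (rule order_trans[rotated])
qed

lemma cauchy_kernel_spread_imag_axis_ge:
  fixes \<mu> :: "real measure" and M y :: real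
  assumes "prob_space \<mu>" and sets: "sets \<mu> = sets borel" and y: "y > 0" "M \<le> y"
    and half: "measure \<mu> {x. \<bar>x\<bar> \<le> M} \<ge> 1 / 2"
  shows "ennreal (1 / 16) * (\<integral>\<^sup>+t. indicator {t. 2 * M \<le> \<bar>t\<bar>} t * ennreal (ln_kernel y t) \<partial>\<mu>)
       \<le> ennreal y * cauchy_kernel_spread \<mu> (\<i> * y)"
proof -
  interpret prob_space \<mu> by fact
  define A B where "A = {x::real. \<bar>x\<bar> \<le> M}" and "B = {x::real. 2 * M \<le> \<bar>x\<bar>}"
  define g where "g t = indicator B t * ennreal (ln_kernel y t / 8)" for t
  have A_sets: "A \<in> sets \<mu>"
    unfolding A_def sets by measurable
  have [measurable]: "g \<in> borel_measurable \<mu>"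
    unfolding g_def[abs_def] B_def ln_kernel_def measurable_cong_sets[OF sets refl] by measurable
  have pointwise: "ennreal (1 / 16) * (indicator B t * ennreal (ln_kernel y t)) \<le> g t * emeasure \<mu> A" for t
  proof -
    have "ennreal (1 / 16) * ennreal (ln_kernel y t) = ennreal (ln_kernel y t / 16)"
      "ennreal (ln_kernel y t / 8) * ennreal (1 / 2) = ennreal (ln_kernel y t / 16)"
      using ln_kernel_nonneg[OF y(1), of t] by (subst ennreal_mult[symmetric]; simp)+
    then have "ennreal (1 / 16) * (indicator B t * ennreal (ln_kernel y t)) = g t * ennreal (1 / 2)"
      by (simp add: g_def indicator_def)
    also have "\<dots> \<le> g t * emeasure \<mu> A"
      using ennreal_leI[OF half] unfolding A_def emeasure_eq_measure by (rule mult_left_mono) simp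
    finally show ?thesis .
  qed
  have "ennreal (1 / 16) * (\<integral>\<^sup>+t. indicator B t * ennreal (ln_kernel y t) \<partial>\<mu>)
      = (\<integral>\<^sup>+t. ennreal (1 / 16) * (indicator B t * ennreal (ln_kernel y t)) \<partial>\<mu>)"
    unfolding B_def ln_kernel_def
    by (rule nn_integral_cmult[symmetric]) (simp add: measurable_cong_sets[OF sets refl])
  also have "\<dots> \<le> (\<integral>\<^sup>+t. g t * emeasure \<mu> A \<partial>\<mu>)"
    by (intro nn_integral_mono pointwise)
  also have "\<dots> = (\<integral>\<^sup>+t. (\<integral>\<^sup>+s. g t * indicator A s \<partial>\<mu>) \<partial>\<mu>)"
    by (simp add: nn_integral_cmult_indicator[OF A_sets])
  also have "\<dots> \<le> (\<integral>\<^sup>+t. (\<integral>\<^sup>+s. ennreal (y * (cmod (1 / (\<i> * y - t) - 1 / (\<i> * y - s)))\<^sup>2) \<partial>\<mu>) \<partial>\<mu>)"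
  proof (intro nn_integral_mono)
    fix t s :: real
    show "g t * indicator A s \<le> ennreal (y * (cmod (1 / (\<i> * y - t) - 1 / (\<i> * y - s)))\<^sup>2)"
      using cauchy_kernel_diff_sq_imag_axis_ge[OF y(1), of s M t] y(2)
      by (auto simp: g_def A_def B_def indicator_def intro: ennreal_leI)
  qed
  also have "\<dots> = ennreal y * cauchy_kernel_spread \<mu> (\<i> * y)"
    using ennreal_mult_cauchy_kernel_spread[OF prob_space_imp_sigma_finite[OF \<open>prob_space \<mu>\<close>] sets
        less_imp_le[OF y(1)]] ..
  finally show ?thesis
    unfolding B_def .
qed

lemma nn_integral_cauchy_kernel_spread_imag_axis_less_top:
  fixes \<mu> :: "real measure" and T :: real
  assumes \<mu>: "prob_space \<mu>" "sets \<mu> = sets borel" and T: "T > 0"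
    and ln_finite: "(\<integral>\<^sup>+x. ennreal (ln (1 + x\<^sup>2)) \<partial>\<mu>) < \<infinity>"
  shows "(\<integral>\<^sup>+y\<in>{T<..}. ennreal y * cauchy_kernel_spread \<mu> (\<i> * y) \<partial>lborel) < \<infinity>"
proof -
  have \<mu>_sigma: "sigma_finite_measure \<mu>"
    using \<mu>(1) by (rule prob_space_imp_sigma_finite)
  have [measurable]: "(\<lambda>y. \<integral>\<^sup>+t. ennreal (ln_kernel y t) \<partial>\<mu>) \<in> borel_measurable borel"
    by (rule borel_measurable_nn_integral_param[OF \<mu>_sigma \<mu>(2)]) (simp add: ln_kernel_def, measurable)
  have "(\<integral>\<^sup>+y\<in>{T<..}. ennreal y * cauchy_kernel_spread \<mu> (\<i> * y) \<partial>lborel)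
      \<le> (\<integral>\<^sup>+y\<in>{T<..}. 4 * (\<integral>\<^sup>+t. 1 * ennreal (ln_kernel y t) \<partial>\<mu>) \<partial>lborel)"
    using T cauchy_kernel_spread_imag_axis_le[OF \<mu>]
    by (intro nn_integral_mono) (simp add: indicator_def)
  also have "\<dots> = 4 * (\<integral>\<^sup>+y\<in>{T<..}. (\<integral>\<^sup>+t. 1 * ennreal (ln_kernel y t) \<partial>\<mu>) \<partial>lborel)"
    by (subst nn_integral_cmult[symmetric]) (simp_all add: mult.assoc measurable_lborel2)
  also have "\<dots> = 4 * (\<integral>\<^sup>+t. 1 * ennreal (ln (1 + t\<^sup>2 / T\<^sup>2) / 2) \<partial>\<mu>)"
    unfolding nn_integral_Ioi_nn_integral_ln_kernel[OF \<mu>_sigma \<mu>(2) borel_measurable_const T] ..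
  also have "\<dots> < \<infinity>"
    using ln_finite nn_integral_ln_rescaled_less_top_iff[OF prob_space.finite_measure[OF \<mu>(1)] \<mu>(2), of "T\<^sup>2"] T
    by (simp add: ennreal_mult_less_top)
  finally show ?thesis .
qed

lemma nn_integral_ln_less_top_if_cauchy_kernel_spread:
  fixes \<mu> :: "real measure" and T :: real
  assumes \<mu>: "prob_space \<mu>" "sets \<mu> = sets borel" and T: "T > 0"
    and spread_finite: "(\<integral>\<^sup>+y\<in>{T<..}. ennreal y * cauchy_kernel_spread \<mu> (\<i> * y) \<partial>lborel) < \<infinity>"
  shows "(\<integral>\<^sup>+x. ennreal (ln (1 + x\<^sup>2)) \<partial>\<mu>) < \<infinity>"
proof -
  have \<mu>_sigma: "sigma_finite_measure \<mu>"
    using \<mu>(1) by (rule prob_space_imp_sigma_finite)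
  obtain M where M: "measure \<mu> {x. \<bar>x\<bar> \<le> M} \<ge> 1 / 2"
    using exists_measure_abs_le_ge_half[OF \<mu>] by blast
  define S where "S = max T M"
  have S: "S > 0" "T \<le> S" "M \<le> S"
    unfolding S_def using T by auto
  define B where "B = {t::real. 2 * M \<le> \<bar>t\<bar>}"
  define L where "L t = indicator B t * ennreal (ln (1 + t\<^sup>2 / S\<^sup>2) / 2)" for t
  have [measurable]: "(\<lambda>y. \<integral>\<^sup>+t. indicator B t * ennreal (ln_kernel y t) \<partial>\<mu>) \<in> borel_measurable borel"
    by (rule borel_measurable_nn_integral_param[OF \<mu>_sigma \<mu>(2)]) (simp add: B_def ln_kernel_def, measurable)
  have "ennreal (1 / 16) * (\<integral>\<^sup>+t. L t \<partial>\<mu>)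
      = ennreal (1 / 16) * (\<integral>\<^sup>+y\<in>{S<..}. (\<integral>\<^sup>+t. indicator B t * ennreal (ln_kernel y t) \<partial>\<mu>) \<partial>lborel)"
    unfolding L_def B_def by (subst nn_integral_Ioi_nn_integral_ln_kernel[OF \<mu>_sigma \<mu>(2) _ S(1)]) simp_all
  also have "\<dots> = (\<integral>\<^sup>+y\<in>{S<..}. ennreal (1 / 16) * (\<integral>\<^sup>+t. indicator B t * ennreal (ln_kernel y t) \<partial>\<mu>) \<partial>lborel)"
    by (subst nn_integral_cmult[symmetric]) (simp_all add: mult.assoc measurable_lborel2)
  also have "\<dots> \<le> (\<integral>\<^sup>+y\<in>{T<..}. ennreal y * cauchy_kernel_spread \<mu> (\<i> * y) \<partial>lborel)"
  proof (intro nn_integral_mono)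
    fix y :: real
    show "ennreal (1 / 16) * (\<integral>\<^sup>+t. indicator B t * ennreal (ln_kernel y t) \<partial>\<mu>) * indicator {S<..} y
        \<le> ennreal y * cauchy_kernel_spread \<mu> (\<i> * y) * indicator {T<..} y"
      using cauchy_kernel_spread_imag_axis_ge[OF \<mu>, of y M] M S unfolding B_def
      by (cases "S < y") (auto simp: indicator_def)
  qed
  finally have "ennreal (1 / 16) * (\<integral>\<^sup>+t. L t \<partial>\<mu>) < \<infinity>"
    using spread_finite by (rule order.strict_trans1)
  then have L_finite: "(\<integral>\<^sup>+t. L t \<partial>\<mu>) < \<infinity>"
    by (auto simp: ennreal_mult_less_top)
  have L_measurable: "L \<in> borel_measurable \<mu>"
    unfolding L_def[abs_def] B_def measurable_cong_sets[OF \<mu>(2) refl] by measurable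
  have "ennreal (ln (1 + t\<^sup>2)) \<le> 2 * L t + ennreal (ln (1 + S\<^sup>2) + ln (1 + 4 * M\<^sup>2))" for t
    unfolding L_def B_def by (rule ln_one_plus_sq_le_split[OF S(1)])
  then show ?thesis
    by (rule nn_integral_less_top_if_le_affine[OF prob_space.finite_measure[OF \<mu>(1)] L_measurable
          _ _ _ L_finite]) simp_all
qed

lemma nn_integral_ln_less_top_iff_cauchy_kernel_spread:
  fixes \<mu> :: "real measure" and T :: real
  assumes "prob_space \<mu>" "sets \<mu> = sets borel" and "T > 0"
  shows "(\<integral>\<^sup>+x. ennreal (ln (1 + x\<^sup>2)) \<partial>\<mu>) < \<infinity>
     \<longleftrightarrow> (\<integral>\<^sup>+y\<in>{T<..}. ennreal y * cauchy_kernel_spread \<mu> (\<i> * y) \<partial>lborel) < \<infinity>"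
  using nn_integral_cauchy_kernel_spread_imag_axis_less_top[OF assms]
    nn_integral_ln_less_top_if_cauchy_kernel_spread[OF assms] by blast

section \<open>The reciprocal Cauchy transform\<close>

lemma integral_cauchy_kernel_sq_imag_axis_ge:
  fixes \<mu> :: "real measure" and M y :: real
  assumes "prob_space \<mu>" and sets: "sets \<mu> = sets borel" and y: "y > 0"
    and half: "measure \<mu> {x. \<bar>x\<bar> \<le> M} \<ge> 1 / 2"
  shows "1 / (2 * (M\<^sup>2 + y\<^sup>2)) \<le> (\<integral>t. (cmod (1 / (\<i> * y - t)))\<^sup>2 \<partial>\<mu>)"
proof -
  interpret prob_space \<mu> by fact
  define A where "A = {x::real. \<bar>x\<bar> \<le> M}"
  have A_sets: "A \<in> sets \<mu>"
    unfolding A_def sets by measurable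
  have iy: "Im (\<i> * y) > 0"
    using y by simp
  have k: "(cmod (1 / (\<i> * y - t)))\<^sup>2 = 1 / (t\<^sup>2 + y\<^sup>2)" for t :: real
    by (simp add: norm_divide power_one_over cmod_power2)
  have p: "0 < M\<^sup>2 + y\<^sup>2"
    using y by (simp add: add_nonneg_pos)
  have "1 / (2 * (M\<^sup>2 + y\<^sup>2)) = 1 / 2 * (1 / (M\<^sup>2 + y\<^sup>2))"
    by simp
  also have "\<dots> \<le> measure \<mu> A * (1 / (M\<^sup>2 + y\<^sup>2))"
    using half p unfolding A_def by (intro mult_right_mono) auto
  also have "\<dots> = (\<integral>t. indicator A t * (1 / (M\<^sup>2 + y\<^sup>2)) \<partial>\<mu>)"
    using A_sets by simp
  also have "\<dots> \<le> (\<integral>t. (cmod (1 / (\<i> * y - t)))\<^sup>2 \<partial>\<mu>)"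
  proof (rule integral_mono)
    show "integrable \<mu> (\<lambda>t. indicator A t * (1 / (M\<^sup>2 + y\<^sup>2)))"
      using A_sets by (intro integrable_mult_left integrable_real_indicator) (auto simp: less_top[symmetric])
    show "integrable \<mu> (\<lambda>t. (cmod (1 / (\<i> * y - t)))\<^sup>2)"
      using integrable_cauchy_kernel[OF finite_measure_axioms sets iy]
      by (intro integrable_const_bound[where B = "(1 / y)\<^sup>2"])
        (auto intro!: power_mono simp: norm_cauchy_kernel_le[OF iy, simplified])
    fix t :: real
    show "indicator A t * (1 / (M\<^sup>2 + y\<^sup>2)) \<le> (cmod (1 / (\<i> * y - t)))\<^sup>2"
    proof (cases "t \<in> A")
      case True
      then have "t\<^sup>2 \<le> M\<^sup>2"
        unfolding A_def by (simp add: abs_le_square_iff[symmetric] abs_le_iff)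
      then show ?thesis
        using True y unfolding k by (simp add: frac_le add_nonneg_pos)
    qed (simp add: k)
  qed
  finally show ?thesis .
qed

lemma norm_cauchy_transform_imag_axis_ge:
  fixes \<mu> :: "real measure" and M y :: real
  assumes \<mu>: "prob_space \<mu>" "sets \<mu> = sets borel" and y: "y > 0"
    and half: "measure \<mu> {x. \<bar>x\<bar> \<le> M} \<ge> 1 / 2"
  shows "y / (2 * (M\<^sup>2 + y\<^sup>2)) \<le> cmod (cauchy_transform \<mu> (\<i> * y))"
proof -
  have iy: "Im (\<i> * y) > 0"
    using y by simp
  have "y * (1 / (2 * (M\<^sup>2 + y\<^sup>2))) \<le> y * (\<integral>t. (cmod (1 / (\<i> * y - t)))\<^sup>2 \<partial>\<mu>)"
    by (rule mult_left_mono[OF integral_cauchy_kernel_sq_imag_axis_ge[OF \<mu> y half]]) (use y in simp)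
  then have "y / (2 * (M\<^sup>2 + y\<^sup>2)) \<le> - Im (cauchy_transform \<mu> (\<i> * y))"
    unfolding Im_cauchy_transform[OF prob_space.finite_measure[OF \<mu>(1)] \<mu>(2) iy] by simp
  also have "\<dots> \<le> cmod (cauchy_transform \<mu> (\<i> * y))"
    using abs_Im_le_cmod by (rule order_trans[rotated]) simp
  finally show ?thesis .
qed

lemma cauchy_transform_imag_axis_sq_bounds:
  fixes \<mu> :: "real measure" and M T y :: real
  assumes \<mu>: "prob_space \<mu>" "sets \<mu> = sets borel" and T: "0 < T" "T < y"
    and half: "measure \<mu> {x. \<bar>x\<bar> \<le> M} \<ge> 1 / 2"
  shows "1 / (2 * (M\<^sup>2 / T\<^sup>2 + 1)\<^sup>2) \<le> 2 * y\<^sup>2 * (cmod (cauchy_transform \<mu> (\<i> * y)))\<^sup>2"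
    and "2 * y\<^sup>2 * (cmod (cauchy_transform \<mu> (\<i> * y)))\<^sup>2 \<le> 2"
proof -
  define g where "g = cmod (cauchy_transform \<mu> (\<i> * y))"
  have y: "y > 0"
    using T by simp
  have "g \<le> 1 / y"
    using norm_cauchy_transform_le[OF \<mu>, of "\<i> * y"] y unfolding g_def by simp
  then have "g\<^sup>2 \<le> (1 / y)\<^sup>2"
    by (rule power_mono) (simp add: g_def)
  then show "2 * y\<^sup>2 * g\<^sup>2 \<le> 2"
    using y by (simp add: field_simps power2_eq_square)
  have p: "0 < M\<^sup>2 + y\<^sup>2"
    using y by (simp add: add_nonneg_pos)
  define K where "K = M\<^sup>2 / T\<^sup>2 + 1"
  have K: "K > 0"
    unfolding K_def by (simp add: add_nonneg_pos)
  have "M\<^sup>2 / y\<^sup>2 \<le> M\<^sup>2 / T\<^sup>2"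
    using T by (intro divide_left_mono power_mono) auto
  then have "2 * (M\<^sup>2 + y\<^sup>2) \<le> 2 * K * y\<^sup>2"
    unfolding K_def using y by (simp add: field_simps)
  then have "y / (2 * K * y\<^sup>2) \<le> y / (2 * (M\<^sup>2 + y\<^sup>2))"
    using p y by (intro divide_left_mono) auto
  also have "\<dots> \<le> g"
    unfolding g_def by (rule norm_cauchy_transform_imag_axis_ge[OF \<mu> y half])
  finally have "(1 / (2 * K * y))\<^sup>2 \<le> g\<^sup>2"
    using y K by (intro power_mono) (auto simp: power2_eq_square)
  then have "2 * y\<^sup>2 * (1 / (2 * K * y))\<^sup>2 \<le> 2 * y\<^sup>2 * g\<^sup>2"
    by (rule mult_left_mono) simp
  moreover have "2 * y\<^sup>2 * (1 / (2 * K * y))\<^sup>2 = 1 / (2 * K\<^sup>2)"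
    using y K by (simp add: field_simps power2_eq_square)
  ultimately have "1 / (2 * K\<^sup>2) \<le> 2 * y\<^sup>2 * g\<^sup>2"
    by simp
  then show "1 / (2 * (M\<^sup>2 / T\<^sup>2 + 1)\<^sup>2) \<le> 2 * y\<^sup>2 * g\<^sup>2"
    unfolding K_def .
qed

lemma F_transform_imag_axis_spread:
  fixes \<mu> :: "real measure" and y :: real
  assumes \<mu>: "prob_space \<mu>" "sets \<mu> = sets borel" and y: "y > 0"
    and G: "cauchy_transform \<mu> (\<i> * y) \<noteq> 0"
  shows "ennreal ((Im (F_transform \<mu> (\<i> * y)) - y) / y\<^sup>2) * ennreal (2 * y\<^sup>2 * (cmod (cauchy_transform \<mu> (\<i> * y)))\<^sup>2)
       = ennreal y * cauchy_kernel_spread \<mu> (\<i> * y)"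
proof -
  define G where "G = cauchy_transform \<mu> (\<i> * y)"
  have iy: "Im (\<i> * y) > 0"
    using y by simp
  have G2: "(cmod G)\<^sup>2 > 0"
    using G unfolding G_def by simp
  have ImF: "Im (F_transform \<mu> (\<i> * y)) = - Im G / (cmod G)\<^sup>2"
    unfolding F_transform_def G_def[symmetric] by (simp add: Im_divide')
  have "(Im (F_transform \<mu> (\<i> * y)) - y) / y\<^sup>2 * (2 * y\<^sup>2 * (cmod G)\<^sup>2) = y * (2 * (- Im G / y - (cmod G)\<^sup>2))"
    unfolding ImF using y G2 by (simp add: field_simps power2_eq_square)
  moreover have "0 \<le> 2 * y\<^sup>2 * (cmod G)\<^sup>2"
    by simp
  ultimately show ?thesis
    using cauchy_kernel_spread_eq[OF \<mu> iy] y unfolding G_def[symmetric]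
    by (simp add: ennreal_mult''[symmetric] ennreal_mult[symmetric] del: ennreal_mult ennreal_mult'')
qed

lemma nn_integral_F_transform_imag_axis_less_top_iff:
  fixes \<mu> :: "real measure" and T :: real
  assumes \<mu>: "prob_space \<mu>" "sets \<mu> = sets borel" and T: "T > 0"
  shows "(\<integral>\<^sup>+y\<in>{T<..}. ennreal ((Im (F_transform \<mu> (\<i> * y)) - y) / y\<^sup>2) \<partial>lborel) < \<infinity>
     \<longleftrightarrow> (\<integral>\<^sup>+y\<in>{T<..}. ennreal y * cauchy_kernel_spread \<mu> (\<i> * y) \<partial>lborel) < \<infinity>"
proof -
  have \<mu>_sigma: "sigma_finite_measure \<mu>"
    using \<mu>(1) by (rule prob_space_imp_sigma_finite)
  obtain M where half: "measure \<mu> {x. \<bar>x\<bar> \<le> M} \<ge> 1 / 2"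
    using exists_measure_abs_le_ge_half[OF \<mu>] by blast
  define c where "c = 1 / (2 * (M\<^sup>2 / T\<^sup>2 + 1)\<^sup>2)"
  have "M\<^sup>2 / T\<^sup>2 + 1 > 0"
    by (simp add: add_nonneg_pos)
  then have c: "c > 0"
    unfolding c_def by simp
  define f where "f y = ennreal ((Im (F_transform \<mu> (\<i> * y)) - y) / y\<^sup>2)" for y :: real
  define g where "g y = ennreal y * cauchy_kernel_spread \<mu> (\<i> * y)" for y :: real
  define q where "q y = 2 * y\<^sup>2 * (cmod (cauchy_transform \<mu> (\<i> * y)))\<^sup>2" for y :: real
  have q: "c \<le> q y" "q y \<le> 2" if "T < y" for y
    using cauchy_transform_imag_axis_sq_bounds[OF \<mu> T that half] unfolding c_def q_def by auto
  have fq: "f y * ennreal (q y) = g y" if "T < y" for y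
    unfolding f_def g_def q_def
    using T that q(1)[OF that] c
    by (intro F_transform_imag_axis_spread[OF \<mu>]) (auto simp: q_def)
  have [measurable]: "cauchy_transform \<mu> \<in> borel_measurable borel"
    by (rule borel_measurable_cauchy_transform[OF \<mu>_sigma \<mu>(2)])
  show ?thesis
    unfolding f_def[symmetric] g_def[symmetric]
  proof (rule nn_integral_Ioi_less_top_iff_if_comparable[where Y = T and B = 0])
    show "f \<in> borel_measurable borel"
      unfolding f_def[abs_def] F_transform_def by measurable
    show "g \<in> borel_measurable borel"
      unfolding g_def[abs_def] by (rule borel_measurable_cauchy_kernel_spread_imag_axis[OF \<mu>_sigma \<mu>(2)])
    fix y assume y: "T < y"
    have "f y * ennreal c \<le> f y * ennreal (q y)"
      using q(1)[OF y] by (intro mult_left_mono ennreal_leI) auto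
    then have fc: "f y * ennreal c \<le> g y"
      unfolding fq[OF y] .
    have "f y = f y * ennreal c * ennreal (1 / c)"
      using c by (simp add: mult.assoc ennreal_mult[symmetric] del: ennreal_mult)
    also have "\<dots> \<le> g y * ennreal (1 / c)"
      using fc by (rule mult_right_mono) simp
    finally show "f y \<le> ennreal (1 / c) * g y"
      by (simp add: mult.commute)
    have "g y \<le> f y * ennreal 2"
      unfolding fq[OF y, symmetric] using q(2)[OF y] by (intro mult_left_mono ennreal_leI) auto
    then show "g y \<le> ennreal 2 * f y"
      by (simp add: mult.commute)
  qed auto
qed

section \<open>Subordination\<close>

lemma sq_dist_comparable:
  fixes y v u t K :: real
  assumes y: "y > 0" and v: "y / 2 \<le> v" "v \<le> y" and u: "\<bar>u\<bar> \<le> K * y"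
  shows "t\<^sup>2 + y\<^sup>2 \<le> (8 * K\<^sup>2 + 4) * ((u - t)\<^sup>2 + v\<^sup>2)"
    and "(u - t)\<^sup>2 + v\<^sup>2 \<le> (8 * K\<^sup>2 + 4) * (t\<^sup>2 + y\<^sup>2)"
proof -
  have "\<bar>u\<bar>\<^sup>2 \<le> (K * y)\<^sup>2"
    using u by (intro power_mono) auto
  then have uK: "u\<^sup>2 \<le> K\<^sup>2 * y\<^sup>2"
    by (simp add: power_mult_distrib)
  have "y\<^sup>2 \<le> (2 * v)\<^sup>2" "v\<^sup>2 \<le> y\<^sup>2"
    using v y by (intro power_mono; simp)+
  then have yv: "y\<^sup>2 \<le> 4 * v\<^sup>2" and vy: "v\<^sup>2 \<le> y\<^sup>2"
    by (simp_all add: power_mult_distrib)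
  have ut: "(u - t)\<^sup>2 \<le> 2 * u\<^sup>2 + 2 * t\<^sup>2"
    using zero_le_power2[of "u + t"] by (simp add: power2_diff power2_sum)
  have tu: "t\<^sup>2 \<le> 2 * (u - t)\<^sup>2 + 2 * u\<^sup>2"
    using zero_le_power2[of "t - 2 * u"] by (simp add: power2_diff power2_sum power_mult_distrib algebra_simps)
  have K2: "K\<^sup>2 * y\<^sup>2 \<le> 4 * (K\<^sup>2 * v\<^sup>2)"
    using mult_left_mono[OF yv, of "K\<^sup>2"] by simp
  have nonneg: "0 \<le> K\<^sup>2 * (u - t)\<^sup>2" "0 \<le> K\<^sup>2 * t\<^sup>2" "0 \<le> K\<^sup>2 * v\<^sup>2" "0 \<le> K\<^sup>2 * y\<^sup>2"
    "0 \<le> (u - t)\<^sup>2" "0 \<le> t\<^sup>2" "0 \<le> u\<^sup>2"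
    by simp_all
  have "(8 * K\<^sup>2 + 4) * ((u - t)\<^sup>2 + v\<^sup>2) = 8 * (K\<^sup>2 * (u - t)\<^sup>2) + 4 * (u - t)\<^sup>2 + 8 * (K\<^sup>2 * v\<^sup>2) + 4 * v\<^sup>2"
    "(8 * K\<^sup>2 + 4) * (t\<^sup>2 + y\<^sup>2) = 8 * (K\<^sup>2 * t\<^sup>2) + 4 * t\<^sup>2 + 8 * (K\<^sup>2 * y\<^sup>2) + 4 * y\<^sup>2"
    by (simp_all add: algebra_simps)
  then show "t\<^sup>2 + y\<^sup>2 \<le> (8 * K\<^sup>2 + 4) * ((u - t)\<^sup>2 + v\<^sup>2)"
    and "(u - t)\<^sup>2 + v\<^sup>2 \<le> (8 * K\<^sup>2 + 4) * (t\<^sup>2 + y\<^sup>2)"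
    using tu ut uK yv vy K2 nonneg by linarith+
qed

lemma cauchy_kernel_spread_at_preimage:
  fixes \<mu> :: "real measure" and y :: real
  assumes \<mu>: "prob_space \<mu>" "sets \<mu> = sets borel" and w: "Im w > 0" and y: "y > 0"
    and F: "F_transform \<mu> w = \<i> * y"
  shows "ennreal (Im w / 2) * cauchy_kernel_spread \<mu> w = ennreal ((y - Im w) / y\<^sup>2)"
proof -
  have "cauchy_transform \<mu> w = 1 / (1 / cauchy_transform \<mu> w)"
    by simp
  also have "\<dots> = 1 / (\<i> * y)"
    using F unfolding F_transform_def by simp
  finally have G: "cauchy_transform \<mu> w = 1 / (\<i> * y)" .
  define D where "D = - Im (cauchy_transform \<mu> w) / Im w - (cmod (cauchy_transform \<mu> w))\<^sup>2"
  have "Im w / 2 * (2 * D) = (y - Im w) / y\<^sup>2"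
    unfolding D_def G using w y by (simp add: Im_divide norm_divide norm_mult field_simps power2_eq_square)
  moreover have "0 \<le> D"
    unfolding D_def using cauchy_kernel_spread_eq(2)[OF \<mu> w] by simp
  ultimately show ?thesis
    unfolding cauchy_kernel_spread_eq(1)[OF \<mu> w] D_def[symmetric] using w
    by (simp add: ennreal_mult[symmetric] del: ennreal_mult)
qed

lemma minus_Im_phi_repr_comparable_spread:
  fixes \<mu> \<sigma> :: "real measure" and \<gamma> y :: real
  assumes \<mu>: "prob_space \<mu>" "sets \<mu> = sets borel" and \<sigma>: "finite_measure \<sigma>" "sets \<sigma> = sets borel"
    and y: "y \<ge> 1" and small: "(\<integral>x. (1 + x\<^sup>2) / (x\<^sup>2 + y\<^sup>2) \<partial>\<sigma>) \<le> 1 / 2"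
    and w: "Im (\<i> * y + phi_repr \<gamma> \<sigma> (\<i> * y)) > 0"
    and F: "F_transform \<mu> (\<i> * y + phi_repr \<gamma> \<sigma> (\<i> * y)) = \<i> * y"
  defines "C \<equiv> 8 * (\<bar>\<gamma>\<bar> + measure \<sigma> (space \<sigma>))\<^sup>2 + 4"
  shows "ennreal (- Im (phi_repr \<gamma> \<sigma> (\<i> * y)) / y\<^sup>2) \<le> ennreal (C\<^sup>2 / 2) * (ennreal y * cauchy_kernel_spread \<mu> (\<i> * y))"
    and "ennreal y * cauchy_kernel_spread \<mu> (\<i> * y) \<le> ennreal (4 * C\<^sup>2) * ennreal (- Im (phi_repr \<gamma> \<sigma> (\<i> * y)) / y\<^sup>2)"
proof -
  define p where "p = phi_repr \<gamma> \<sigma> (\<i> * y)"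
  define w where "w = \<i> * y + p"
  have y0: "y > 0" and iy: "Im (\<i> * y) > 0"
    using y by simp_all
  have C: "C > 0"
    unfolding C_def by (simp add: add_nonneg_pos)
  have v: "y / 2 \<le> Im w" "Im w \<le> y" and u: "\<bar>Re w\<bar> \<le> (\<bar>\<gamma>\<bar> + measure \<sigma> (space \<sigma>)) * y"
    using phi_repr_imag_axis_bounds[OF \<sigma> y small, of \<gamma>] unfolding w_def p_def by simp_all
  have dist: "(cmod (w - t))\<^sup>2 = (Re w - t)\<^sup>2 + (Im w)\<^sup>2" "(cmod (\<i> * y - t))\<^sup>2 = t\<^sup>2 + y\<^sup>2" for t :: real
    by (simp_all add: cmod_power2)
  note cmp = sq_dist_comparable[OF y0 v u, folded C_def]
  have spread_w: "cauchy_kernel_spread \<mu> w \<le> ennreal (C\<^sup>2) * cauchy_kernel_spread \<mu> (\<i> * y)"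
    using w cmp(1) unfolding w_def[symmetric] p_def[symmetric]
    by (intro cauchy_kernel_spread_le_if_dist_le[OF prob_space_imp_sigma_finite[OF \<mu>(1)] \<mu>(2) _ iy C]) (auto simp: dist)
  have spread_iy: "cauchy_kernel_spread \<mu> (\<i> * y) \<le> ennreal (C\<^sup>2) * cauchy_kernel_spread \<mu> w"
    using w cmp(2) unfolding w_def[symmetric] p_def[symmetric]
    by (intro cauchy_kernel_spread_le_if_dist_le[OF prob_space_imp_sigma_finite[OF \<mu>(1)] \<mu>(2) iy _ C]) (auto simp: dist)
  have at_w: "ennreal (Im w / 2) * cauchy_kernel_spread \<mu> w = ennreal (- Im p / y\<^sup>2)"
    using cauchy_kernel_spread_at_preimage[OF \<mu> _ y0 F] w unfolding w_def[symmetric] p_def[symmetric]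
    by (simp add: w_def)
  have "ennreal (- Im p / y\<^sup>2) \<le> ennreal (y / 2) * (ennreal (C\<^sup>2) * cauchy_kernel_spread \<mu> (\<i> * y))"
    unfolding at_w[symmetric] using v(2) spread_w by (intro mult_mono ennreal_leI) auto
  also have "\<dots> = (ennreal (y / 2) * ennreal (C\<^sup>2)) * cauchy_kernel_spread \<mu> (\<i> * y)"
    by (simp add: mult.assoc)
  also have "ennreal (y / 2) * ennreal (C\<^sup>2) = ennreal (C\<^sup>2 / 2) * ennreal y"
    using y0 by (simp add: ennreal_mult[symmetric] mult.commute del: ennreal_mult)
  finally show "ennreal (- Im (phi_repr \<gamma> \<sigma> (\<i> * y)) / y\<^sup>2) \<le> ennreal (C\<^sup>2 / 2) * (ennreal y * cauchy_kernel_spread \<mu> (\<i> * y))"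
    unfolding p_def by (simp add: mult.assoc)
  have "ennreal y * cauchy_kernel_spread \<mu> (\<i> * y) \<le> ennreal (2 * Im w) * (ennreal (C\<^sup>2) * cauchy_kernel_spread \<mu> w)"
    using v(1) spread_iy by (intro mult_mono ennreal_leI) auto
  also have "\<dots> = (ennreal (2 * Im w) * ennreal (C\<^sup>2)) * cauchy_kernel_spread \<mu> w"
    by (simp add: mult.assoc)
  also have "ennreal (2 * Im w) * ennreal (C\<^sup>2) = ennreal (4 * C\<^sup>2) * ennreal (Im w / 2)"
    using v y0 by (simp add: ennreal_mult[symmetric] mult.commute del: ennreal_mult)
  finally show "ennreal y * cauchy_kernel_spread \<mu> (\<i> * y) \<le> ennreal (4 * C\<^sup>2) * ennreal (- Im (phi_repr \<gamma> \<sigma> (\<i> * y)) / y\<^sup>2)"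
    unfolding at_w[symmetric] p_def[symmetric] by (simp add: mult.assoc)
qed

lemma nn_integral_phi_imag_axis_less_top_iff_spread:
  fixes \<mu> \<sigma> :: "real measure" and \<gamma> T :: real
  assumes fgp: "free_generating_pair \<mu> \<gamma> \<sigma>" and T: "T > 0"
  shows "(\<integral>\<^sup>+y\<in>{T<..}. ennreal (- Im (phi_repr \<gamma> \<sigma> (\<i> * y)) / y\<^sup>2) \<partial>lborel) < \<infinity>
     \<longleftrightarrow> (\<integral>\<^sup>+y\<in>{T<..}. ennreal y * cauchy_kernel_spread \<mu> (\<i> * y) \<partial>lborel) < \<infinity>"
proof -
  have \<mu>: "prob_space \<mu>" "sets \<mu> = sets borel" and \<sigma>: "finite_measure \<sigma>" "sets \<sigma> = sets borel"
    using fgp unfolding free_generating_pair_def by auto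
  obtain \<alpha> \<beta> where "\<alpha> > 0"
    and cone: "\<And>z. Im z > \<beta> \<Longrightarrow> \<bar>Re z\<bar> < \<alpha> * Im z \<Longrightarrow>
        Im (z + phi_repr \<gamma> \<sigma> z) > 0 \<and> F_transform \<mu> (z + phi_repr \<gamma> \<sigma> z) = z"
    using fgp unfolding free_generating_pair_def by blast
  have "\<forall>\<^sub>F y in at_top. (\<integral>x. (1 + x\<^sup>2) / (x\<^sup>2 + y\<^sup>2) \<partial>\<sigma>) < 1 / 2"
    by (rule order_tendstoD(2)[OF integral_one_plus_sq_div_tendsto_0[OF \<sigma>]]) simp
  then obtain N where N: "\<And>y. y \<ge> N \<Longrightarrow> (\<integral>x. (1 + x\<^sup>2) / (x\<^sup>2 + y\<^sup>2) \<partial>\<sigma>) < 1 / 2"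
    by (auto simp: eventually_at_top_linorder)
  define Y where "Y = max (max T \<beta>) (max N 1)"
  define B where "B = max ((1 + 1 / T\<^sup>2) / T * measure \<sigma> (space \<sigma>)) (4 / T)"
  define C where "C = 8 * (\<bar>\<gamma>\<bar> + measure \<sigma> (space \<sigma>))\<^sup>2 + 4"
  note [measurable] = borel_measurable_phi_repr[OF \<sigma>, of \<gamma>]
  show ?thesis
  proof (rule nn_integral_Ioi_less_top_iff_if_comparable[where Y = Y and B = B and C = "C\<^sup>2 / 2" and C' = "4 * C\<^sup>2"])
    show "(\<lambda>y. ennreal y * cauchy_kernel_spread \<mu> (\<i> * y)) \<in> borel_measurable borel"
      by (rule borel_measurable_cauchy_kernel_spread_imag_axis[OF prob_space_imp_sigma_finite[OF \<mu>(1)] \<mu>(2)])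
    fix y assume "T < y" "y \<le> Y"
    show "ennreal (- Im (phi_repr \<gamma> \<sigma> (\<i> * y)) / y\<^sup>2) \<le> ennreal B"
      using ennreal_minus_Im_phi_repr_div_sq_le[OF \<sigma> T \<open>T < y\<close>, of \<gamma>]
      by (rule order_trans) (simp add: B_def ennreal_leI)
    have "ennreal y * cauchy_kernel_spread \<mu> (\<i> * y) \<le> ennreal (4 / y)"
      using T \<open>T < y\<close> by (intro cauchy_kernel_spread_imag_axis_le_inverse[OF \<mu>]) simp
    also have "\<dots> \<le> ennreal B"
      unfolding B_def using T \<open>T < y\<close> by (intro ennreal_leI max.coboundedI2 divide_left_mono) auto
    finally show "ennreal y * cauchy_kernel_spread \<mu> (\<i> * y) \<le> ennreal B" .
  next
    fix y assume "Y < y"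
    then have y: "y \<ge> 1" "y > \<beta>" "y \<ge> N"
      unfolding Y_def by auto
    then have sub: "Im (\<i> * y + phi_repr \<gamma> \<sigma> (\<i> * y)) > 0"
      "F_transform \<mu> (\<i> * y + phi_repr \<gamma> \<sigma> (\<i> * y)) = \<i> * y"
      using cone[of "\<i> * y"] \<open>\<alpha> > 0\<close> by auto
    note cmp = minus_Im_phi_repr_comparable_spread[OF \<mu> \<sigma> y(1) less_imp_le[OF N[OF y(3)]] sub, folded C_def]
    show "ennreal (- Im (phi_repr \<gamma> \<sigma> (\<i> * y)) / y\<^sup>2) \<le> ennreal (C\<^sup>2 / 2) * (ennreal y * cauchy_kernel_spread \<mu> (\<i> * y))"
      by (rule cmp(1))
    show "ennreal y * cauchy_kernel_spread \<mu> (\<i> * y) \<le> ennreal (4 * C\<^sup>2) * ennreal (- Im (phi_repr \<gamma> \<sigma> (\<i> * y)) / y\<^sup>2)"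
      by (rule cmp(2))
  qed (auto simp: Y_def)
qed

theorem theorem6p1:
  fixes \<mu> \<sigma> :: "real measure" and \<gamma> T :: real
  assumes "free_generating_pair \<mu> \<gamma> \<sigma>"
    and "T > 0"
  shows "((\<integral>\<^sup>+ x. ennreal (ln (1 + x\<^sup>2)) \<partial>\<mu>) < \<infinity>
            \<longleftrightarrow> (\<integral>\<^sup>+ x. ennreal (ln (1 + x\<^sup>2)) \<partial>\<sigma>) < \<infinity>)
       \<and> ((\<integral>\<^sup>+ x. ennreal (ln (1 + x\<^sup>2)) \<partial>\<sigma>) < \<infinity>
            \<longleftrightarrow> (\<integral>\<^sup>+ y\<in>{T<..}. ennreal (- Im (phi_repr \<gamma> \<sigma> (\<i> * complex_of_real y)) / y\<^sup>2) \<partial>lborel) < \<infinity>)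
       \<and> ((\<integral>\<^sup>+ y\<in>{T<..}. ennreal (- Im (phi_repr \<gamma> \<sigma> (\<i> * complex_of_real y)) / y\<^sup>2) \<partial>lborel) < \<infinity>
            \<longleftrightarrow> (\<integral>\<^sup>+ y\<in>{0<..<1/T}. ennreal (Im (R_transform \<gamma> \<sigma> (\<i> * complex_of_real y))) \<partial>lborel) < \<infinity>)
       \<and> ((\<integral>\<^sup>+ y\<in>{0<..<1/T}. ennreal (Im (R_transform \<gamma> \<sigma> (\<i> * complex_of_real y))) \<partial>lborel) < \<infinity>
            \<longleftrightarrow> (\<integral>\<^sup>+ y\<in>{T<..}. ennreal ((Im (F_transform \<mu> (\<i> * complex_of_real y)) - y) / y\<^sup>2) \<partial>lborel) < \<infinity>)"
proof -
  have \<mu>: "prob_space \<mu>" "sets \<mu> = sets borel" and \<sigma>: "finite_measure \<sigma>" "sets \<sigma> = sets borel"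
    using assms(1) unfolding free_generating_pair_def by auto
  show ?thesis
    using nn_integral_ln_less_top_iff_cauchy_kernel_spread[OF \<mu> assms(2)]
      nn_integral_phi_imag_axis_less_top_iff_ln[OF \<sigma> assms(2), of \<gamma>]
      nn_integral_phi_imag_axis_less_top_iff_spread[OF assms]
      nn_integral_R_transform_imag_axis_eq[OF \<sigma> assms(2), of \<gamma>]
      nn_integral_F_transform_imag_axis_less_top_iff[OF \<mu> assms(2)]
    by simp
qed

end
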